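(* Let $d\in\mathbb N\cup\{\infty\}$. Let $k\ne0$ be a reproducing kernel over a non-empty set $D$ and ${\boldsymbol\gamma}\in\mathcal W_d$ with $\mathfrak Z^{{\boldsymbol\gamma},k}\ne\emptyset$; put $K=M^{{\boldsymbol\gamma},k}$. Let $l\ne0$ be a reproducing kernel over $D$ with $H(l)\subseteq H(1+k)$, and let $C^\downarrow>0$ be an upper bound on the norm of this embedding. Let ${\boldsymbol\gamma}_\ast\in\mathcal M_d$ with ${\boldsymbol\gamma}_\ast\le{\boldsymbol\gamma}$ and put ${\boldsymbol\gamma}_\ast^\downarrow=T^\downarrow_{d,C^\downarrow}{\boldsymbol\gamma}_\ast$. Then $\mathfrak Z^{{\boldsymbol\gamma},k}\subseteq\mathfrak Z^{{\boldsymbol\gamma}^\downarrow_\ast,l}$, and with $L^\downarrow_\ast=M^{{\boldsymbol\gamma}^\downarrow_\ast,l}$ we have $f|_{\mathfrak Z^{{\boldsymbol\gamma},k}}\in H(K)$ for all $f\in H(L^\downarrow_\ast)$, and the restriction map $H(L^\downarrow_\ast)\to H(K)$, $f\mapsto f|_{\mathfrak Z^{{\boldsymbol\gamma},k}}$, has norm at most one.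
   Context: For a reproducing kernel $M$ over a set $\mathfrak Z$, $H(M)$ is its RKHS with norm $\|\cdot\|_M$. Write $[d]=\{1,\dots,d\}$ if $d\in\mathbb N$, $[d]=\mathbb N$ if $d=\infty$; $[s]=\{1,\dots,s\}$. $\mathcal U_d$ is the set of finite subsets of $[d]$; $\mathcal W_d$ the set of families $(\gamma_u)_{u\in\mathcal U_d}$ of non-negative reals, ordered componentwise. $(\Delta_v{\boldsymbol\gamma})_u=\sum_{w\subseteq v}(-1)^{|w|}\gamma_{u\cup w}$; $\mathcal M_d$ is the set of weights with $\Delta_v{\boldsymbol\gamma}\ge0$ for all $v\in\mathcal U_d$. For $C>0$ and ${\boldsymbol\gamma}\in\mathcal M_d$: $(T^\downarrow_{d,C}{\boldsymbol\gamma})_u=C^{-2|u|}(\Delta_{[d]\setminus u}{\boldsymbol\gamma})_u$ if $d\in\mathbb N$, $=C^{-2|u|}\lim_{s\to\infty}(\Delta_{[s]\setminus u}{\boldsymbol\gamma})_u$ if $d=\infty$. For a reproducing kernel $m$ over $D$ and weights ${\boldsymbol\eta}$: $m_u(\mathbf x,\mathbf y)=\prod_{j\in u}m(x_j,y_j)$ ($m_\emptyset=1$) for $\mathbf x,\mathbf y\in D^{[d]}$; $\mathfrak Z^{{\boldsymbol\eta},m}=\{\mathbf x\in D^{[d]}:\sum_u\eta_um_u(\mathbf x,\mathbf x)<\infty\}$; and $M^{{\boldsymbol\eta},m}(\mathbf x,\mathbf y)=\sum_u\eta_um_u(\mathbf x,\mathbf y)$ on $\mathfrak Z^{{\boldsymbol\eta},m}\times\mathfrak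 Z^{{\boldsymbol\eta},m}$ (when non-empty). *)

theory Defs
  imports "HOL-Analysis.Analysis" "HOL-Library.Extended_Nat"
begin

text \<open>Real-valued kernels over a set Z (a subset of an ambient type).  Functions on Z
are represented as total functions; their values outside Z are irrelevant.\<close>

definition repr_kernel :: "'a set \<Rightarrow> ('a \<Rightarrow> 'a \<Rightarrow> real) \<Rightarrow> bool" where
  "repr_kernel Z M \<longleftrightarrow>
     (\<forall>x\<in>Z. \<forall>y\<in>Z. M x y = M y x) \<and>
     (\<forall>F a. finite F \<longrightarrow> F \<subseteq> Z \<longrightarrow> (\<Sum>x\<in>F. \<Sum>y\<in>F. a x * a y * M x y) \<ge> 0)"

text \<open>finite linear combinations of kernel sections M(.,y), y in Z, given by coefficients\<close>
definition fin_comb :: "'a set \<Rightarrow> ('a \<Rightarrow> real) \<Rightarrow> bool" where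
  "fin_comb Z c \<longleftrightarrow> finite {y. c y \<noteq> 0} \<and> {y. c y \<noteq> 0} \<subseteq> Z"

definition comb_eval :: "('a \<Rightarrow> 'a \<Rightarrow> real) \<Rightarrow> ('a \<Rightarrow> real) \<Rightarrow> 'a \<Rightarrow> real" where
  "comb_eval M c x = (\<Sum>y\<in>{y. c y \<noteq> 0}. c y * M x y)"

definition comb_sqnorm :: "('a \<Rightarrow> 'a \<Rightarrow> real) \<Rightarrow> ('a \<Rightarrow> real) \<Rightarrow> real" where
  "comb_sqnorm M c = (\<Sum>y\<in>{y. c y \<noteq> 0}. \<Sum>z\<in>{z. c z \<noteq> 0}. c y * c z * M y z)"

definition approx_seq :: "('a \<Rightarrow> 'a \<Rightarrow> real) \<Rightarrow> 'a set \<Rightarrow> ('a \<Rightarrow> real) \<Rightarrow> (nat \<Rightarrow> 'a \<Rightarrow> real) \<Rightarrow> bool" where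
  "approx_seq M Z f c \<longleftrightarrow>
     (\<forall>n. fin_comb Z (c n)) \<and>
     (\<forall>e>0. \<exists>N. \<forall>m\<ge>N. \<forall>n\<ge>N. comb_sqnorm M (\<lambda>y. c m y - c n y) < e) \<and>
     (\<forall>x\<in>Z. (\<lambda>n. comb_eval M (c n) x) \<longlonglongrightarrow> f x)"

definition rkhs :: "('a \<Rightarrow> 'a \<Rightarrow> real) \<Rightarrow> 'a set \<Rightarrow> ('a \<Rightarrow> real) set" where
  "rkhs M Z = {f. \<exists>c. approx_seq M Z f c}"

definition rkhs_norm :: "('a \<Rightarrow> 'a \<Rightarrow> real) \<Rightarrow> 'a set \<Rightarrow> ('a \<Rightarrow> real) \<Rightarrow> real" where
  "rkhs_norm M Z f =
     (THE r. \<exists>c. approx_seq M Z f c \<and> (\<lambda>n. sqrt (comb_sqnorm M (c n))) \<longlonglongrightarrow> r)"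

definition idx :: "enat \<Rightarrow> nat set" where
  "idx d = {j. 1 \<le> j \<and> enat j \<le> d}"

definition Uset :: "enat \<Rightarrow> nat set set" where
  "Uset d = {u. finite u \<and> u \<subseteq> idx d}"

definition weights :: "enat \<Rightarrow> (nat set \<Rightarrow> real) \<Rightarrow> bool" where
  "weights d \<gamma> \<longleftrightarrow> (\<forall>u\<in>Uset d. \<gamma> u \<ge> 0)"

definition weight_le :: "enat \<Rightarrow> (nat set \<Rightarrow> real) \<Rightarrow> (nat set \<Rightarrow> real) \<Rightarrow> bool" where
  "weight_le d \<gamma> \<eta> \<longleftrightarrow> (\<forall>u\<in>Uset d. \<gamma> u \<le> \<eta> u)"

definition Delta :: "nat set \<Rightarrow> (nat set \<Rightarrow> real) \<Rightarrow> nat set \<Rightarrow> real" where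
  "Delta v \<gamma> u = (\<Sum>w\<in>Pow v. (-1) ^ card w * \<gamma> (u \<union> w))"

definition Mweights :: "enat \<Rightarrow> (nat set \<Rightarrow> real) \<Rightarrow> bool" where
  "Mweights d \<gamma> \<longleftrightarrow> weights d \<gamma> \<and> (\<forall>v\<in>Uset d. \<forall>u\<in>Uset d. Delta v \<gamma> u \<ge> 0)"

definition Tdown :: "enat \<Rightarrow> real \<Rightarrow> (nat set \<Rightarrow> real) \<Rightarrow> nat set \<Rightarrow> real" where
  "Tdown d C \<gamma> u =
     (case d of
        enat n \<Rightarrow> (1 / C ^ (2 * card u)) * Delta ({1..n} - u) \<gamma> u
      | \<infinity> \<Rightarrow> (1 / C ^ (2 * card u)) * lim (\<lambda>s. Delta ({1..s} - u) \<gamma> u))"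

definition prodk :: "('a \<Rightarrow> 'a \<Rightarrow> real) \<Rightarrow> nat set \<Rightarrow> (nat \<Rightarrow> 'a) \<Rightarrow> (nat \<Rightarrow> 'a) \<Rightarrow> real" where
  "prodk m u x y = (\<Prod>j\<in>u. m (x j) (y j))"

text \<open>points of D^[d] are extensional functions on [d]\<close>
definition Zset :: "enat \<Rightarrow> 'a set \<Rightarrow> (nat set \<Rightarrow> real) \<Rightarrow> ('a \<Rightarrow> 'a \<Rightarrow> real) \<Rightarrow> (nat \<Rightarrow> 'a) set" where
  "Zset d D \<eta> m = {x \<in> PiE (idx d) (\<lambda>_. D). (\<lambda>u. \<eta> u * prodk m u x x) summable_on Uset d}"

definition Mker :: "enat \<Rightarrow> (nat set \<Rightarrow> real) \<Rightarrow> ('a \<Rightarrow> 'a \<Rightarrow> real) \<Rightarrow> (nat \<Rightarrow> 'a) \<Rightarrow> (nat \<Rightarrow> 'a) \<Rightarrow> real" where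
  "Mker d \<eta> m x y = (\<Sum>\<^sub>\<infinity>u\<in>Uset d. \<eta> u * prodk m u x y)"

end

theory Submission
  imports Defs
begin

text \<open>A function \<open>f\<close> belongs to \<open>H(M)\<close> with norm at most \<open>r\<close> iff
  \<open>\<bar>\<Sum> a\<^sub>x f(x)\<bar> \<le> r \<cdot> sqrt (\<Sum> a\<^sub>x a\<^sub>y M(x, y))\<close> for every finitely supported family \<open>a\<close>;
  sufficiency is shown by minimising the energy \<open>\<parallel>g\<parallel>\<^sup>2 - 2\<langle>g, f\<rangle>\<close> over finite kernel
  combinations \<open>g\<close>.  Hence restriction is a contraction from \<open>H(L)\<close> to \<open>H(K)\<close> once
  \<open>K - L\<close> is positive semidefinite on the smaller domain.  The norm bound of the embedding
  \<open>H(l) \<subseteq> H(1 + k)\<close> gives \<open>l \<le> C\<^sup>2 (1 + k)\<close> in this order, so by the Schur product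
  theorem the product kernels satisfy \<open>l\<^sub>u \<le> C\<^sup>2\<^sup>|\<^sup>u\<^sup>| \<Sum>\<^sub>v\<^sub>\<subseteq>\<^sub>u k\<^sub>v\<close>.  Summing against the
  weights \<open>T\<^sup>\<down>\<gamma>\<^sub>*\<close> and exchanging the sums, Moebius inversion bounds the coefficient
  of \<open>k\<^sub>v\<close> by \<open>\<gamma>\<^sub>*\<^sub>v \<le> \<gamma>\<^sub>v\<close>.  The same estimate on the diagonal gives the inclusion of
  the domains.\<close>

section \<open>Quadratic forms of kernels\<close>

definition qform :: "'a set \<Rightarrow> ('a \<Rightarrow> 'a \<Rightarrow> real) \<Rightarrow> ('a \<Rightarrow> real) \<Rightarrow> real" where
  "qform S M a = (\<Sum>x\<in>S. \<Sum>y\<in>S. a x * a y * M x y)"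

definition bform :: "'a set \<Rightarrow> ('a \<Rightarrow> 'a \<Rightarrow> real) \<Rightarrow> ('a \<Rightarrow> real) \<Rightarrow> ('a \<Rightarrow> real) \<Rightarrow> real" where
  "bform S M a b = (\<Sum>x\<in>S. \<Sum>y\<in>S. a x * b y * M x y)"

lemma qform_eq_bform: "qform S M a = bform S M a a"
  unfolding qform_def bform_def ..

lemma qform_cong: "(\<And>x. x \<in> S \<Longrightarrow> a x = b x) \<Longrightarrow> qform S M a = qform S M b"
  unfolding qform_def by (intro sum.cong refl) auto

lemma qform_mono_neutral:
  assumes "finite T" "S \<subseteq> T" "\<And>x. x \<in> T - S \<Longrightarrow> a x = 0"
  shows "qform T M a = qform S M a"
proof -
  have "qform T M a = (\<Sum>x\<in>T. \<Sum>y\<in>S. a x * a y * M x y)"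
    unfolding qform_def by (intro sum.cong refl sum.mono_neutral_right) (use assms in auto)
  also have "\<dots> = qform S M a"
    unfolding qform_def by (rule sum.mono_neutral_right) (use assms in auto)
  finally show ?thesis .
qed

lemma qform_restrict:
  assumes "finite T" "S \<subseteq> T"
  shows "qform S M a = qform T M (\<lambda>x. if x \<in> S then a x else 0)"
proof -
  have "qform S M a = qform S M (\<lambda>x. if x \<in> S then a x else 0)"
    by (rule qform_cong) simp
  also have "\<dots> = qform T M (\<lambda>x. if x \<in> S then a x else 0)"
    by (rule qform_mono_neutral[symmetric]) (use assms in auto)
  finally show ?thesis .
qed

lemma qform_kernel_cong:
  "(\<And>x y. x \<in> S \<Longrightarrow> y \<in> S \<Longrightarrow> M x y = N x y) \<Longrightarrow> qform S M a = qform S N a"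
  unfolding qform_def by (intro sum.cong refl) auto

lemma qform_kernel_add: "qform S (\<lambda>x y. M x y + N x y) a = qform S M a + qform S N a"
  unfolding qform_def by (simp add: sum.distrib algebra_simps)

lemma qform_kernel_diff: "qform S (\<lambda>x y. M x y - N x y) a = qform S M a - qform S N a"
  unfolding qform_def by (simp add: sum_subtractf algebra_simps)

lemma qform_kernel_cmult: "qform S (\<lambda>x y. c * M x y) a = c * qform S M a"
  unfolding qform_def by (simp add: sum_distrib_left algebra_simps)

lemma qform_kernel_sum: "qform S (\<lambda>x y. \<Sum>v\<in>V. M v x y) a = (\<Sum>v\<in>V. qform S (M v) a)"
  unfolding qform_def by (simp add: sum_distrib_left sum.swap[of _ S V] sum.swap[of _ S V])

lemma qform_kernel_scaled: "qform S (\<lambda>x y. w x * w y * M x y) a = qform S M (\<lambda>x. a x * w x)"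
  unfolding qform_def by (simp add: algebra_simps)

lemma qform_rank_one: "qform S (\<lambda>x y. w x * w y) a = (\<Sum>x\<in>S. a x * w x)\<^sup>2"
  unfolding qform_def by (simp add: power2_eq_square sum_product algebra_simps)

lemma qform_diff_commute: "qform S M (\<lambda>x. a x - b x) = qform S M (\<lambda>x. b x - a x)"
  unfolding qform_def by (simp add: algebra_simps)

lemma qform_parallelogram:
  "qform S M (\<lambda>x. a x - b x) = 2 * qform S M a + 2 * qform S M b - 4 * qform S M (\<lambda>x. (a x + b x) / 2)"
proof -
  have "(a x - b x) * (a y - b y) * M x y
      = 2 * (a x * a y * M x y) + 2 * (b x * b y * M x y) - 4 * ((a x + b x) / 2 * ((a y + b y) / 2) * M x y)"
    for x y by (simp add: field_simps)
  then show ?thesis unfolding qform_def by (simp add: sum.distrib sum_subtractf sum_distrib_left)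
qed

lemma qform_singleton_one: "qform {x} M (\<lambda>_. 1) = M x x"
  by (simp add: qform_def)

lemma bform_delta_right:
  assumes "finite S" "x \<in> S"
  shows "bform S M a (\<lambda>y. if y = x then 1 else 0) = (\<Sum>z\<in>S. a z * M z x)"
proof -
  have "bform S M a (\<lambda>y. if y = x then 1 else 0) = (\<Sum>z\<in>S. \<Sum>y\<in>S. if y = x then a z * M z x else 0)"
    unfolding bform_def by (intro sum.cong refl) auto
  then show ?thesis using assms by simp
qed

lemma qform_delta:
  assumes "finite S" "x \<in> S"
  shows "qform S M (\<lambda>y. if y = x then 1 else 0) = M x x"
proof -
  have "qform S M (\<lambda>y. if y = x then 1 else 0) = (\<Sum>z\<in>S. if z = x then M z x else 0)"
    unfolding qform_eq_bform bform_delta_right[OF assms] by (intro sum.cong refl) auto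
  then show ?thesis using assms by simp
qed

lemma qform_add_scaled:
  assumes "\<And>x y. x \<in> S \<Longrightarrow> y \<in> S \<Longrightarrow> M x y = M y x"
  shows "qform S M (\<lambda>x. a x + t * b x) = qform S M a + 2 * t * bform S M a b + t\<^sup>2 * qform S M b"
proof -
  have "bform S M b a = bform S M a b"
    unfolding bform_def by (subst sum.swap) (use assms in \<open>auto intro!: sum.cong simp: mult.commute\<close>)
  moreover have "qform S M (\<lambda>x. a x + t * b x)
      = qform S M a + t * bform S M a b + t * bform S M b a + t\<^sup>2 * qform S M b"
    unfolding qform_def bform_def
    by (simp add: sum.distrib sum_distrib_left algebra_simps power2_eq_square)
  ultimately show ?thesis by simp
qed

lemma quadratic_nonneg_discriminant:
  fixes \<alpha> \<beta> \<gamma> :: real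
  assumes nonneg: "\<And>t. 0 \<le> \<alpha> + 2 * t * \<beta> + t\<^sup>2 * \<gamma>" and "0 \<le> \<gamma>"
  shows "\<beta>\<^sup>2 \<le> \<alpha> * \<gamma>"
proof (cases "\<gamma> = 0")
  case True
  have "0 \<le> \<alpha> + 2 * (- (\<alpha> + 1) / (2 * \<beta>)) * \<beta>"
    using nonneg[of "- (\<alpha> + 1) / (2 * \<beta>)"] True by simp
  then have "\<beta> = 0" by (cases "\<beta> = 0") (auto simp: field_simps)
  with True show ?thesis by simp
next
  case False
  have "0 \<le> \<alpha> + 2 * (- \<beta> / \<gamma>) * \<beta> + (- \<beta> / \<gamma>)\<^sup>2 * \<gamma>" by (rule nonneg)
  also have "\<dots> = \<alpha> - \<beta>\<^sup>2 / \<gamma>" using False by (simp add: power2_eq_square field_simps)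
  finally show ?thesis using False \<open>0 \<le> \<gamma>\<close> by (simp add: field_simps)
qed

section \<open>Positive semidefinite kernels\<close>

lemma repr_kernel_sym: "repr_kernel Z M \<Longrightarrow> x \<in> Z \<Longrightarrow> y \<in> Z \<Longrightarrow> M x y = M y x"
  unfolding repr_kernel_def by blast

lemma qform_nonneg: "repr_kernel Z M \<Longrightarrow> finite S \<Longrightarrow> S \<subseteq> Z \<Longrightarrow> 0 \<le> qform S M a"
  unfolding repr_kernel_def qform_def by blast

lemma repr_kernelI:
  assumes "\<And>x y. x \<in> Z \<Longrightarrow> y \<in> Z \<Longrightarrow> M x y = M y x"
    and "\<And>F a. finite F \<Longrightarrow> F \<subseteq> Z \<Longrightarrow> 0 \<le> qform F M a"
  shows "repr_kernel Z M"
  using assms unfolding repr_kernel_def qform_def by blast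

lemma repr_kernel_subset: "repr_kernel Z M \<Longrightarrow> Y \<subseteq> Z \<Longrightarrow> repr_kernel Y M"
  unfolding repr_kernel_def by blast

lemma repr_kernel_finiteI:
  assumes "finite Z" "\<And>x y. x \<in> Z \<Longrightarrow> y \<in> Z \<Longrightarrow> M x y = M y x" "\<And>a. 0 \<le> qform Z M a"
  shows "repr_kernel Z M"
proof (rule repr_kernelI)
  fix F a assume "finite F" "F \<subseteq> Z"
  then show "0 \<le> qform F M a" using qform_restrict[OF assms(1)] assms(3) by metis
qed (rule assms(2))

lemma repr_kernel_diag_nonneg: "repr_kernel Z M \<Longrightarrow> x \<in> Z \<Longrightarrow> 0 \<le> M x x"
  using qform_nonneg[of Z M "{x}" "\<lambda>_. 1"] by (simp add: qform_singleton_one)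

lemma bform_Cauchy_Schwarz:
  assumes "repr_kernel Z M" "finite S" "S \<subseteq> Z"
  shows "(bform S M a b)\<^sup>2 \<le> qform S M a * qform S M b"
proof (rule quadratic_nonneg_discriminant)
  have symS: "\<And>x y. x \<in> S \<Longrightarrow> y \<in> S \<Longrightarrow> M x y = M y x"
    using repr_kernel_sym[OF assms(1)] assms(3) by blast
  show "0 \<le> qform S M a + 2 * t * bform S M a b + t\<^sup>2 * qform S M b" for t
    using qform_nonneg[OF assms, of "\<lambda>x. a x + t * b x"] by (simp only: qform_add_scaled[OF symS])
qed (rule qform_nonneg[OF assms])

lemma abs_bform_le:
  assumes "repr_kernel Z M" "finite S" "S \<subseteq> Z"
  shows "\<bar>bform S M a b\<bar> \<le> sqrt (qform S M a) * sqrt (qform S M b)"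
proof -
  have "\<bar>bform S M a b\<bar>\<^sup>2 \<le> qform S M a * qform S M b"
    using bform_Cauchy_Schwarz[OF assms] by simp
  then show ?thesis by (simp add: real_le_rsqrt flip: real_sqrt_mult)
qed

lemma sqrt_qform_add_le:
  assumes "repr_kernel Z M" "finite S" "S \<subseteq> Z"
  shows "sqrt (qform S M (\<lambda>x. a x + b x)) \<le> sqrt (qform S M a) + sqrt (qform S M b)"
proof (rule real_le_lsqrt)
  have symS: "\<And>x y. x \<in> S \<Longrightarrow> y \<in> S \<Longrightarrow> M x y = M y x"
    using repr_kernel_sym[OF assms(1)] assms(3) by blast
  have "qform S M (\<lambda>x. a x + b x) = qform S M a + 2 * bform S M a b + qform S M b"
    using qform_add_scaled[OF symS, where a=a and t=1 and b=b] by simp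
  also have "\<dots> \<le> qform S M a + 2 * (sqrt (qform S M a) * sqrt (qform S M b)) + qform S M b"
    using abs_bform_le[OF assms, of a b] by linarith
  also have "\<dots> = (sqrt (qform S M a) + sqrt (qform S M b))\<^sup>2"
    using qform_nonneg[OF assms] by (simp add: power2_sum)
  finally show "qform S M (\<lambda>x. a x + b x) \<le> (sqrt (qform S M a) + sqrt (qform S M b))\<^sup>2" .
qed (use qform_nonneg[OF assms] in simp)

lemma repr_kernel_insert_cross_bound:
  assumes "finite F" "x \<notin> F" "repr_kernel (insert x F) M"
  shows "(\<Sum>z\<in>F. a z * M z x)\<^sup>2 \<le> qform F M a * M x x"
proof -
  define a' where "a' z = (if z = x then 0 else a z)" for z
  have "bform (insert x F) M a' (\<lambda>y. if y = x then 1 else 0) = (\<Sum>z\<in>F. a z * M z x)"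
    unfolding bform_delta_right[OF finite.insertI[OF assms(1)] insertI1]
    using assms(1,2) by (auto simp: a'_def intro!: sum.cong)
  moreover have "qform (insert x F) M a' = qform F M a"
  proof -
    have "qform (insert x F) M a' = qform F M a'"
      by (rule qform_mono_neutral) (use assms(1) in \<open>auto simp: a'_def\<close>)
    also have "\<dots> = qform F M a" by (rule qform_cong) (use assms(2) in \<open>auto simp: a'_def\<close>)
    finally show ?thesis .
  qed
  moreover have "qform (insert x F) M (\<lambda>y. if y = x then 1 else 0) = M x x"
    using assms(1) by (simp add: qform_delta)
  ultimately show ?thesis
    using bform_Cauchy_Schwarz[OF assms(3) _ order_refl, of a' "\<lambda>y. if y = x then 1 else 0"] assms(1)
    by simp
qed

lemma repr_kernel_insert_schur_complement:
  assumes "finite F" "x \<notin> F" and M: "repr_kernel (insert x F) M"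
  obtains w where "repr_kernel F (\<lambda>y z. M y z - w y * w z)"
    and "\<And>y z. y \<in> insert x F \<Longrightarrow> z \<in> insert x F \<Longrightarrow> y = x \<or> z = x \<Longrightarrow> M y z = w y * w z"
proof -
  have sym: "M y z = M z y" if "y \<in> insert x F" "z \<in> insert x F" for y z
    using repr_kernel_sym[OF M] that by blast
  have cross: "(\<Sum>z\<in>F. a z * M z x)\<^sup>2 \<le> qform F M a * M x x" for a
    by (rule repr_kernel_insert_cross_bound[OF assms])
  have Mxx: "0 \<le> M x x" by (rule repr_kernel_diag_nonneg[OF M]) simp
  \<comment> \<open>If \<open>M x x = 0\<close>, then \<open>w = 0\<close> by the convention \<open>t / 0 = 0\<close>, and \<open>M z x = 0\<close> by \<open>cross\<close>.\<close>
  define w where "w y = M y x / sqrt (M x x)" for y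
  have ww: "w y * w z = M y x * M z x / M x x" for y z
    using Mxx by (simp add: w_def real_sqrt_mult[symmetric])
  have "M y z = w y * w z" if yz: "y \<in> insert x F" "z \<in> insert x F" "y = x \<or> z = x" for y z
  proof (cases "M x x = 0")
    case True
    have "M t x = 0" if "t \<in> insert x F" for t
      using cross[of "\<lambda>y. of_bool (y = t)"] that assms(1) True by (auto simp: Int_absorb1)
    then have "M y z = 0" using yz sym[OF yz(1,2)] by auto
    then show ?thesis by (simp add: ww True)
  next
    case False
    then show ?thesis using yz sym by (auto simp: ww)
  qed
  moreover have "repr_kernel F (\<lambda>y z. M y z - w y * w z)"
  proof (rule repr_kernel_finiteI[OF assms(1)])
    show "M y z - w y * w z = M z y - w z * w y" if "y \<in> F" "z \<in> F" for y z
      using sym that by (simp add: mult.commute)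
    fix a
    have "(\<Sum>z\<in>F. a z * w z)\<^sup>2 = (\<Sum>z\<in>F. a z * M z x)\<^sup>2 / M x x"
      using Mxx by (simp add: w_def sum_divide_distrib[symmetric] power_divide)
    also have "\<dots> \<le> qform F M a"
      using cross[of a] Mxx qform_nonneg[OF M assms(1) subset_insertI]
      by (cases "M x x = 0") (auto simp: divide_le_eq)
    finally show "0 \<le> qform F (\<lambda>y z. M y z - w y * w z) a"
      by (simp add: qform_kernel_diff qform_rank_one)
  qed
  ultimately show ?thesis using that by blast
qed

lemma gram_decomposition:
  assumes "finite F" "repr_kernel F M"
  shows "\<exists>(n::nat) v. \<forall>x\<in>F. \<forall>y\<in>F. M x y = (\<Sum>i<n. v i x * v i y)"
  using assms
proof (induction F arbitrary: M rule: finite_induct)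
  case empty
  show ?case by auto
next
  case (insert x F)
  obtain w where w: "repr_kernel F (\<lambda>y z. M y z - w y * w z)"
    and w_x: "\<And>y z. y \<in> insert x F \<Longrightarrow> z \<in> insert x F \<Longrightarrow> y = x \<or> z = x \<Longrightarrow> M y z = w y * w z"
    using repr_kernel_insert_schur_complement[OF insert(1,2) insert.prems] by blast
  from insert.IH[OF w] obtain n :: nat and v
    where v: "\<forall>y\<in>F. \<forall>z\<in>F. M y z - w y * w z = (\<Sum>i<n. v i y * v i z)"
    by blast
  define v' where "v' i = (if i < n then (\<lambda>y. if y = x then 0 else v i y) else w)" for i
  have "M y z = (\<Sum>i<Suc n. v' i y * v' i z)" if "y \<in> insert x F" "z \<in> insert x F" for y z
  proof -
    have "(\<Sum>i<Suc n. v' i y * v' i z)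
        = (\<Sum>i<n. (if y = x then 0 else v i y) * (if z = x then 0 else v i z)) + w y * w z"
      by (simp add: v'_def)
    moreover have "M y z
        = (\<Sum>i<n. (if y = x then 0 else v i y) * (if z = x then 0 else v i z)) + w y * w z"
    proof (cases "y = x \<or> z = x")
      case True
      then show ?thesis using w_x[OF that True] by auto
    next
      case False
      then have "M y z - w y * w z = (\<Sum>i<n. v i y * v i z)" using v that by auto
      then show ?thesis using False by simp
    qed
    ultimately show ?thesis by simp
  qed
  then show ?case by blast
qed

lemma repr_kernel_comp:
  assumes "repr_kernel D m" "g ` Z \<subseteq> D"
  shows "repr_kernel Z (\<lambda>x y. m (g x) (g y))"
proof (rule repr_kernelI)
  show "m (g x) (g y) = m (g y) (g x)" if "x \<in> Z" "y \<in> Z" for x y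
    using repr_kernel_sym[OF assms(1)] assms(2) that by blast
  fix F a assume F: "finite F" "F \<subseteq> Z"
  have "g ` F \<subseteq> D" using F(2) assms(2) by blast
  then obtain n :: nat and v where v: "\<forall>p\<in>g ` F. \<forall>q\<in>g ` F. m p q = (\<Sum>i<n. v i p * v i q)"
    using gram_decomposition[OF finite_imageI[OF F(1)] repr_kernel_subset[OF assms(1)]] by blast
  have "qform F (\<lambda>x y. m (g x) (g y)) a = qform F (\<lambda>x y. \<Sum>i<n. v i (g x) * v i (g y)) a"
    by (rule qform_kernel_cong) (use v in auto)
  also have "\<dots> = (\<Sum>i<n. (\<Sum>x\<in>F. a x * v i (g x))\<^sup>2)"
    by (simp add: qform_kernel_sum qform_rank_one)
  finally show "0 \<le> qform F (\<lambda>x y. m (g x) (g y)) a" by (simp add: sum_nonneg)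
qed

lemma repr_kernel_mult:
  assumes "repr_kernel Z P" "repr_kernel Z R"
  shows "repr_kernel Z (\<lambda>x y. P x y * R x y)"
proof (rule repr_kernelI)
  show "P x y * R x y = P y x * R y x" if "x \<in> Z" "y \<in> Z" for x y
    using repr_kernel_sym[OF assms(1) that] repr_kernel_sym[OF assms(2) that] by simp
  fix F a assume F: "finite F" "F \<subseteq> Z"
  obtain n :: nat and v where v: "\<forall>x\<in>F. \<forall>y\<in>F. R x y = (\<Sum>i<n. v i x * v i y)"
    using gram_decomposition[OF F(1) repr_kernel_subset[OF assms(2) F(2)]] by blast
  have "qform F (\<lambda>x y. P x y * R x y) a = qform F (\<lambda>x y. \<Sum>i<n. v i x * v i y * P x y) a"
    by (rule qform_kernel_cong) (use v in \<open>auto simp: sum_distrib_left mult.commute\<close>)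
  also have "\<dots> = (\<Sum>i<n. qform F P (\<lambda>x. a x * v i x))"
    by (simp add: qform_kernel_sum qform_kernel_scaled)
  finally show "0 \<le> qform F (\<lambda>x y. P x y * R x y) a"
    using qform_nonneg[OF assms(1) F] by (simp add: sum_nonneg)
qed

lemma repr_kernel_one: "repr_kernel Z (\<lambda>x y. 1)"
proof (rule repr_kernelI)
  show "0 \<le> qform F (\<lambda>x y. 1) a" for F a
    using qform_rank_one[of F "\<lambda>_. 1" a] by simp
qed simp

lemma repr_kernel_add:
  assumes "repr_kernel Z M" "repr_kernel Z N"
  shows "repr_kernel Z (\<lambda>x y. M x y + N x y)"
proof (rule repr_kernelI)
  show "M x y + N x y = M y x + N y x" if "x \<in> Z" "y \<in> Z" for x y
    using repr_kernel_sym[OF assms(1) that] repr_kernel_sym[OF assms(2) that] by simp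
  show "0 \<le> qform F (\<lambda>x y. M x y + N x y) a" if "finite F" "F \<subseteq> Z" for F a
    using qform_nonneg[OF assms(1) that] qform_nonneg[OF assms(2) that] by (simp add: qform_kernel_add)
qed

lemma repr_kernel_cmult: "0 \<le> c \<Longrightarrow> repr_kernel Z M \<Longrightarrow> repr_kernel Z (\<lambda>x y. c * M x y)"
  by (rule repr_kernelI) (simp_all add: repr_kernel_sym qform_kernel_cmult qform_nonneg)

lemma repr_kernel_prod:
  assumes "finite u" "\<And>j. j \<in> u \<Longrightarrow> repr_kernel Z (A j)"
  shows "repr_kernel Z (\<lambda>x y. \<Prod>j\<in>u. A j x y)"
  using assms
proof (induction u rule: finite_induct)
  case empty
  show ?case using repr_kernel_one by simp
next
  case (insert j u)
  then show ?case using repr_kernel_mult[of Z "A j"] by simp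
qed

lemma repr_kernel_abs_le:
  assumes M: "repr_kernel Z M" and x: "x \<in> Z" and y: "y \<in> Z"
  shows "\<bar>M x y\<bar> \<le> (M x x + M y y) / 2"
proof -
  have diag: "0 \<le> M x x" "0 \<le> M y y" using repr_kernel_diag_nonneg[OF M] x y by auto
  have "(M x y)\<^sup>2 \<le> M x x * M y y"
  proof (cases "x = y")
    case True
    then show ?thesis by (simp add: power2_eq_square)
  next
    case False
    have "repr_kernel (insert x {y}) M" using repr_kernel_subset[OF M] x y by simp
    from repr_kernel_insert_cross_bound[OF _ _ this, of "\<lambda>_. 1"] False
    have "(M y x)\<^sup>2 \<le> M y y * M x x" by (simp add: qform_singleton_one)
    then show ?thesis unfolding repr_kernel_sym[OF M x y] by (simp add: mult.commute)
  qed
  also have "\<dots> \<le> ((M x x + M y y) / 2)\<^sup>2"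
  proof -
    have "0 \<le> (M x x - M y y)\<^sup>2" by simp
    then show ?thesis by (simp add: power2_eq_square field_simps)
  qed
  finally have "\<bar>M x y\<bar>\<^sup>2 \<le> ((M x x + M y y) / 2)\<^sup>2" by simp
  then show ?thesis by (rule power2_le_imp_le) (use diag in simp)
qed

definition kernel_le :: "'a set \<Rightarrow> ('a \<Rightarrow> 'a \<Rightarrow> real) \<Rightarrow> ('a \<Rightarrow> 'a \<Rightarrow> real) \<Rightarrow> bool" where
  "kernel_le Z M N \<longleftrightarrow> repr_kernel Z (\<lambda>x y. N x y - M x y)"

lemma kernel_le_qform:
  assumes "kernel_le Z M N" "finite F" "F \<subseteq> Z"
  shows "qform F M a \<le> qform F N a"
  using qform_nonneg[OF assms[unfolded kernel_le_def], of a] by (simp add: qform_kernel_diff)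

lemma kernel_leI:
  assumes "repr_kernel Z M" "repr_kernel Z N"
    and "\<And>F a. finite F \<Longrightarrow> F \<subseteq> Z \<Longrightarrow> qform F M a \<le> qform F N a"
  shows "kernel_le Z M N"
  unfolding kernel_le_def
proof (rule repr_kernelI)
  show "N x y - M x y = N y x - M y x" if "x \<in> Z" "y \<in> Z" for x y
    using repr_kernel_sym[OF assms(1) that] repr_kernel_sym[OF assms(2) that] by simp
qed (use assms(3) in \<open>simp add: qform_kernel_diff\<close>)

lemma repr_kernel_kernel_le: "repr_kernel Z M \<Longrightarrow> kernel_le Z M N \<Longrightarrow> repr_kernel Z N"
  unfolding kernel_le_def using repr_kernel_add[of Z M "\<lambda>x y. N x y - M x y"] by simp

lemma kernel_le_prod:
  assumes "finite u" "\<And>j. j \<in> u \<Longrightarrow> repr_kernel Z (A j)" "\<And>j. j \<in> u \<Longrightarrow> kernel_le Z (A j) (B j)"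
  shows "kernel_le Z (\<lambda>x y. \<Prod>j\<in>u. A j x y) (\<lambda>x y. \<Prod>j\<in>u. B j x y)"
  using assms unfolding kernel_le_def
proof (induction u rule: finite_induct)
  case empty
  show ?case by (rule repr_kernelI) (simp_all add: qform_def)
next
  case (insert j u)
  have "repr_kernel Z (B i)" if "i \<in> insert j u" for i
    using repr_kernel_add[OF insert.prems(1,2)[OF that]] by simp
  then have prodB: "repr_kernel Z (\<lambda>x y. \<Prod>j\<in>u. B j x y)"
    by (intro repr_kernel_prod insert(1)) simp
  have "repr_kernel Z (\<lambda>x y. (B j x y - A j x y) * (\<Prod>j\<in>u. B j x y)
          + A j x y * ((\<Prod>j\<in>u. B j x y) - (\<Prod>j\<in>u. A j x y)))"
    using insert by (intro repr_kernel_add repr_kernel_mult prodB) simp_all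
  then show ?case using insert(1,2) by (simp add: algebra_simps)
qed

section \<open>Finite kernel combinations and the RKHS norm\<close>

lemma fin_combI:
  assumes "finite S" "S \<subseteq> Z" "\<And>y. y \<notin> S \<Longrightarrow> c y = 0"
  shows "fin_comb Z c"
  unfolding fin_comb_def using assms finite_subset[of "{y. c y \<noteq> 0}" S] by blast

lemma fin_combD: "fin_comb Z c \<Longrightarrow> finite {y. c y \<noteq> 0}" "fin_comb Z c \<Longrightarrow> {y. c y \<noteq> 0} \<subseteq> Z"
  unfolding fin_comb_def by auto

lemma comb_eval_eq_sum:
  assumes "finite S" "{y. c y \<noteq> 0} \<subseteq> S"
  shows "comb_eval M c x = (\<Sum>y\<in>S. c y * M x y)"
  unfolding comb_eval_def by (rule sum.mono_neutral_left) (use assms in auto)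

lemma comb_sqnorm_eq_qform:
  assumes "finite S" "{y. c y \<noteq> 0} \<subseteq> S"
  shows "comb_sqnorm M c = qform S M c"
proof -
  have "comb_sqnorm M c = qform {y. c y \<noteq> 0} M c"
    unfolding comb_sqnorm_def qform_def ..
  also have "\<dots> = qform S M c"
    by (rule qform_mono_neutral[symmetric]) (use assms in auto)
  finally show ?thesis .
qed

lemma sum_comb_eval_eq_bform:
  assumes "finite S" "{y. c y \<noteq> 0} \<subseteq> S"
  shows "(\<Sum>x\<in>S. a x * comb_eval M c x) = bform S M a c"
  unfolding bform_def comb_eval_eq_sum[OF assms]
  by (simp add: sum_distrib_left mult.assoc)

lemma comb_eval_diff:
  assumes "fin_comb Z a" "fin_comb Z b"
  shows "comb_eval M (\<lambda>y. a y - b y) x = comb_eval M a x - comb_eval M b x"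
proof -
  let ?S = "{y. a y \<noteq> 0} \<union> {y. b y \<noteq> 0}"
  have "finite ?S" using fin_combD(1)[OF assms(1)] fin_combD(1)[OF assms(2)] by blast
  then show ?thesis
    by (subst (1 2 3) comb_eval_eq_sum[of ?S]) (auto simp: sum_subtractf left_diff_distrib)
qed

lemma comb_sqnorm_nonneg: "repr_kernel Z M \<Longrightarrow> fin_comb Z c \<Longrightarrow> 0 \<le> comb_sqnorm M c"
  using comb_sqnorm_eq_qform[of "{y. c y \<noteq> 0}" c M] qform_nonneg[of Z M "{y. c y \<noteq> 0}" c]
  by (simp add: fin_comb_def)

lemma comb_pairing_bound:
  assumes M: "repr_kernel Z M" and F: "finite F" "F \<subseteq> Z" and c: "fin_comb Z c"
  shows "\<bar>\<Sum>x\<in>F. a x * comb_eval M c x\<bar> \<le> sqrt (qform F M a) * sqrt (comb_sqnorm M c)"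
proof -
  define T where "T = F \<union> {y. c y \<noteq> 0}"
  have T: "finite T" "T \<subseteq> Z" "F \<subseteq> T" "{y. c y \<noteq> 0} \<subseteq> T"
    using F fin_combD[OF c] by (auto simp: T_def)
  define a' where "a' x = (if x \<in> F then a x else 0)" for x
  have "(\<Sum>x\<in>F. a x * comb_eval M c x) = (\<Sum>x\<in>T. a' x * comb_eval M c x)"
    by (rule sum.mono_neutral_cong_right[symmetric]) (use T in \<open>auto simp: a'_def\<close>)
  also have "\<dots> = bform T M a' c" by (rule sum_comb_eval_eq_bform[OF T(1,4)])
  finally have "(\<Sum>x\<in>F. a x * comb_eval M c x) = bform T M a' c" .
  moreover have "qform T M a' = qform F M a"
    unfolding a'_def by (rule qform_restrict[symmetric, OF T(1,3)])
  ultimately show ?thesis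
    using abs_bform_le[OF M T(1,2), of a' c] comb_sqnorm_eq_qform[OF T(1,4)] by simp
qed

lemma sqrt_comb_sqnorm_diff_le:
  assumes M: "repr_kernel Z M" and a: "fin_comb Z a" and b: "fin_comb Z b"
  shows "\<bar>sqrt (comb_sqnorm M a) - sqrt (comb_sqnorm M b)\<bar> \<le> sqrt (comb_sqnorm M (\<lambda>y. a y - b y))"
proof -
  define S where "S = {y. a y \<noteq> 0} \<union> {y. b y \<noteq> 0}"
  have S: "finite S" "S \<subseteq> Z" using fin_combD[OF a] fin_combD[OF b] by (auto simp: S_def)
  have norms: "comb_sqnorm M a = qform S M a" "comb_sqnorm M b = qform S M b"
      "comb_sqnorm M (\<lambda>y. a y - b y) = qform S M (\<lambda>y. a y - b y)"
    by (rule comb_sqnorm_eq_qform[OF S(1)]; auto simp: S_def)+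
  have "sqrt (qform S M a) \<le> sqrt (qform S M (\<lambda>y. a y - b y)) + sqrt (qform S M b)"
    using sqrt_qform_add_le[OF M S, of "\<lambda>y. a y - b y" b] by simp
  moreover have "sqrt (qform S M b) \<le> sqrt (qform S M (\<lambda>y. a y - b y)) + sqrt (qform S M a)"
    using sqrt_qform_add_le[OF M S, of "\<lambda>y. b y - a y" a] qform_diff_commute[of S M a b] by simp
  ultimately show ?thesis unfolding norms by linarith
qed

lemma approx_seq_norm_convergent:
  assumes M: "repr_kernel Z M" and c: "approx_seq M Z f c"
  shows "convergent (\<lambda>n. sqrt (comb_sqnorm M (c n)))"
proof -
  have fin: "fin_comb Z (c n)" for n using c by (simp add: approx_seq_def)
  have "Cauchy (\<lambda>n. sqrt (comb_sqnorm M (c n)))"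
  proof (rule metric_CauchyI)
    fix e :: real assume "0 < e"
    then obtain N where N: "\<forall>m\<ge>N. \<forall>n\<ge>N. comb_sqnorm M (\<lambda>y. c m y - c n y) < e\<^sup>2"
      using c unfolding approx_seq_def by (meson zero_less_power)
    have "dist (sqrt (comb_sqnorm M (c m))) (sqrt (comb_sqnorm M (c n))) < e"
      if "m \<ge> N" "n \<ge> N" for m n
    proof -
      have "sqrt (comb_sqnorm M (\<lambda>y. c m y - c n y)) < e"
        using N that \<open>0 < e\<close> real_sqrt_less_iff[of _ "e\<^sup>2"] by fastforce
      then show ?thesis
        using sqrt_comb_sqnorm_diff_le[OF M fin fin, of m n] by (simp add: dist_real_def)
    qed
    then show "\<exists>N. \<forall>m\<ge>N. \<forall>n\<ge>N. dist (sqrt (comb_sqnorm M (c m))) (sqrt (comb_sqnorm M (c n))) < e"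
      by blast
  qed
  then show ?thesis by (simp add: Cauchy_convergent_iff)
qed

lemma approx_seq_functional_bound:
  assumes M: "repr_kernel Z M" and c: "approx_seq M Z f c"
    and lim: "(\<lambda>n. sqrt (comb_sqnorm M (c n))) \<longlonglongrightarrow> r" and F: "finite F" "F \<subseteq> Z"
  shows "\<bar>\<Sum>x\<in>F. a x * f x\<bar> \<le> r * sqrt (qform F M a)"
proof (rule tendsto_le[OF trivial_limit_sequentially])
  show "(\<lambda>n. sqrt (comb_sqnorm M (c n)) * sqrt (qform F M a)) \<longlonglongrightarrow> r * sqrt (qform F M a)"
    by (intro tendsto_intros lim)
  show "(\<lambda>n. \<bar>\<Sum>x\<in>F. a x * comb_eval M (c n) x\<bar>) \<longlonglongrightarrow> \<bar>\<Sum>x\<in>F. a x * f x\<bar>"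
    using c F unfolding approx_seq_def by (intro tendsto_intros) auto
  show "\<forall>\<^sub>F n in sequentially. \<bar>\<Sum>x\<in>F. a x * comb_eval M (c n) x\<bar>
      \<le> sqrt (comb_sqnorm M (c n)) * sqrt (qform F M a)"
    using comb_pairing_bound[OF M F] c by (simp add: approx_seq_def mult.commute)
qed

text \<open>For \<open>n \<ge> N\<close> the pairing of \<open>c m\<close> with \<open>c n\<close> is within \<open>\<epsilon> \<parallel>c m\<parallel>\<close> of \<open>\<parallel>c m\<parallel>\<^sup>2\<close>, and
  it tends to \<open>\<Sum> (c m)(x) f(x) \<le> r' \<parallel>c m\<parallel>\<close>.\<close>

lemma approx_seq_norm_le_of_tail:
  assumes M: "repr_kernel Z M" and c: "approx_seq M Z f c" and "0 \<le> r'" "0 < \<epsilon>"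
    and bound: "\<And>F a. finite F \<Longrightarrow> F \<subseteq> Z \<Longrightarrow> \<bar>\<Sum>x\<in>F. a x * f x\<bar> \<le> r' * sqrt (qform F M a)"
    and tail: "\<And>n. N \<le> n \<Longrightarrow> comb_sqnorm M (\<lambda>y. c n y - c m y) < \<epsilon>\<^sup>2"
  shows "sqrt (comb_sqnorm M (c m)) \<le> r' + \<epsilon>"
proof -
  have fin: "fin_comb Z (c n)" for n using c by (simp add: approx_seq_def)
  define F where "F = {y. c m y \<noteq> 0}"
  define \<nu> where "\<nu> = sqrt (comb_sqnorm M (c m))"
  have F: "finite F" "F \<subseteq> Z" using fin_combD[OF fin] by (auto simp: F_def)
  have "0 \<le> \<nu>" using comb_sqnorm_nonneg[OF M fin] by (simp add: \<nu>_def)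
  have qform_F: "qform F M (c m) = \<nu>\<^sup>2"
  proof -
    have "qform F M (c m) = comb_sqnorm M (c m)"
      using comb_sqnorm_eq_qform[OF F(1), of "c m" M] by (simp add: F_def)
    then show ?thesis using comb_sqnorm_nonneg[OF M fin, of m] by (simp add: \<nu>_def)
  qed
  have "\<nu>\<^sup>2 - \<nu> * \<epsilon> \<le> (\<Sum>x\<in>F. c m x * comb_eval M (c n) x)" if "N \<le> n" for n
  proof -
    have "(\<Sum>x\<in>F. c m x * comb_eval M (c m) x) = \<nu>\<^sup>2"
      using sum_comb_eval_eq_bform[OF F(1), of "c m"] qform_F by (simp add: F_def qform_eq_bform)
    moreover have "\<bar>\<Sum>x\<in>F. c m x * comb_eval M (\<lambda>y. c n y - c m y) x\<bar> \<le> \<nu> * \<epsilon>"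
    proof -
      have "sqrt (comb_sqnorm M (\<lambda>y. c n y - c m y)) \<le> \<epsilon>"
        using tail[OF that] \<open>0 < \<epsilon>\<close> by (intro real_le_lsqrt) auto
      have "fin_comb Z (\<lambda>y. c n y - c m y)"
        by (rule fin_combI[of "{y. c n y \<noteq> 0} \<union> F"]) (use fin_combD[OF fin, of n] F in \<open>auto simp: F_def\<close>)
      then have "\<bar>\<Sum>x\<in>F. c m x * comb_eval M (\<lambda>y. c n y - c m y) x\<bar>
          \<le> \<nu> * sqrt (comb_sqnorm M (\<lambda>y. c n y - c m y))"
        using comb_pairing_bound[OF M F, of "\<lambda>y. c n y - c m y" "c m"] qform_F \<open>0 \<le> \<nu>\<close> by simp
      also have "\<dots> \<le> \<nu> * \<epsilon>" by (rule mult_left_mono) fact+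
      finally show ?thesis .
    qed
    ultimately show ?thesis
      by (simp add: comb_eval_diff[OF fin fin] right_diff_distrib sum_subtractf)
  qed
  then have "\<nu>\<^sup>2 - \<nu> * \<epsilon> \<le> (\<Sum>x\<in>F. c m x * f x)"
    by (intro LIMSEQ_le_const[where X = "\<lambda>n. \<Sum>x\<in>F. c m x * comb_eval M (c n) x"])
      (use c F in \<open>auto simp: approx_seq_def intro!: tendsto_intros\<close>)
  also have "\<dots> \<le> r' * \<nu>"
    using bound[OF F, of "c m"] qform_F \<open>0 \<le> \<nu>\<close> by simp
  finally have "\<nu> * (\<nu> - \<epsilon> - r') \<le> 0" by (simp add: power2_eq_square algebra_simps)
  then show ?thesis
    using \<open>0 \<le> \<nu>\<close> \<open>0 < \<epsilon>\<close> \<open>0 \<le> r'\<close> unfolding \<nu>_def[symmetric]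
    by (cases "\<nu> = 0") (auto simp: mult_le_0_iff)
qed

lemma approx_seq_norm_limit_le:
  assumes M: "repr_kernel Z M" and c: "approx_seq M Z f c"
    and lim: "(\<lambda>n. sqrt (comb_sqnorm M (c n))) \<longlonglongrightarrow> r" and "0 \<le> r'"
    and bound: "\<And>F a. finite F \<Longrightarrow> F \<subseteq> Z \<Longrightarrow> \<bar>\<Sum>x\<in>F. a x * f x\<bar> \<le> r' * sqrt (qform F M a)"
  shows "r \<le> r'"
proof (rule field_le_epsilon)
  fix \<epsilon> :: real assume "0 < \<epsilon>"
  then obtain N where N: "\<forall>m\<ge>N. \<forall>n\<ge>N. comb_sqnorm M (\<lambda>y. c n y - c m y) < \<epsilon>\<^sup>2"
    using c unfolding approx_seq_def by (meson zero_less_power)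
  have "sqrt (comb_sqnorm M (c m)) \<le> r' + \<epsilon>" if "N \<le> m" for m
    using N that by (intro approx_seq_norm_le_of_tail[OF M c \<open>0 \<le> r'\<close> \<open>0 < \<epsilon>\<close> bound, of N]) auto
  then show "r \<le> r' + \<epsilon>" by (intro LIMSEQ_le_const2[OF lim]) auto
qed

lemma approx_seq_norm_limit_nonneg:
  assumes M: "repr_kernel Z M" and c: "approx_seq M Z f c"
    and lim: "(\<lambda>n. sqrt (comb_sqnorm M (c n))) \<longlonglongrightarrow> r"
  shows "0 \<le> r"
  by (rule LIMSEQ_le_const[OF lim]) (use comb_sqnorm_nonneg[OF M] c in \<open>auto simp: approx_seq_def\<close>)

lemma rkhs_norm_eqI:
  assumes M: "repr_kernel Z M" and c: "approx_seq M Z f c"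
    and lim: "(\<lambda>n. sqrt (comb_sqnorm M (c n))) \<longlonglongrightarrow> r"
  shows "rkhs_norm M Z f = r"
  unfolding rkhs_norm_def
proof (rule the_equality)
  show "\<exists>c. approx_seq M Z f c \<and> (\<lambda>n. sqrt (comb_sqnorm M (c n))) \<longlonglongrightarrow> r"
    using c lim by blast
next
  fix r2 assume "\<exists>c. approx_seq M Z f c \<and> (\<lambda>n. sqrt (comb_sqnorm M (c n))) \<longlonglongrightarrow> r2"
  then obtain c2 where c2: "approx_seq M Z f c2" and lim2: "(\<lambda>n. sqrt (comb_sqnorm M (c2 n))) \<longlonglongrightarrow> r2"
    by blast
  have "r \<le> r2"
    by (rule approx_seq_norm_limit_le[OF M c lim approx_seq_norm_limit_nonneg[OF M c2 lim2]
          approx_seq_functional_bound[OF M c2 lim2]])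
  moreover have "r2 \<le> r"
    by (rule approx_seq_norm_limit_le[OF M c2 lim2 approx_seq_norm_limit_nonneg[OF M c lim]
          approx_seq_functional_bound[OF M c lim]])
  ultimately show "r2 = r" by simp
qed

lemma rkhs_norm_limit:
  assumes M: "repr_kernel Z M" and f: "f \<in> rkhs M Z"
  obtains c where "approx_seq M Z f c" "(\<lambda>n. sqrt (comb_sqnorm M (c n))) \<longlonglongrightarrow> rkhs_norm M Z f"
proof -
  obtain c where c: "approx_seq M Z f c" using f unfolding rkhs_def by blast
  then obtain r where lim: "(\<lambda>n. sqrt (comb_sqnorm M (c n))) \<longlonglongrightarrow> r"
    using approx_seq_norm_convergent[OF M] convergent_def by blast
  show ?thesis using that[OF c] lim rkhs_norm_eqI[OF M c lim] by simp
qed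

lemma rkhs_norm_nonneg: "repr_kernel Z M \<Longrightarrow> f \<in> rkhs M Z \<Longrightarrow> 0 \<le> rkhs_norm M Z f"
  by (metis rkhs_norm_limit approx_seq_norm_limit_nonneg)

lemma rkhs_functional_bound:
  assumes M: "repr_kernel Z M" and f: "f \<in> rkhs M Z" and F: "finite F" "F \<subseteq> Z"
  shows "\<bar>\<Sum>x\<in>F. a x * f x\<bar> \<le> rkhs_norm M Z f * sqrt (qform F M a)"
  by (metis rkhs_norm_limit[OF M f] approx_seq_functional_bound[OF M _ _ F])

lemma rkhs_comb_eval:
  assumes M: "repr_kernel Z M" and c: "fin_comb Z c"
  shows "comb_eval M c \<in> rkhs M Z" "rkhs_norm M Z (comb_eval M c) = sqrt (comb_sqnorm M c)"
proof -
  have "approx_seq M Z (comb_eval M c) (\<lambda>n. c)"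
    using c by (simp add: approx_seq_def comb_sqnorm_def)
  then show "comb_eval M c \<in> rkhs M Z" "rkhs_norm M Z (comb_eval M c) = sqrt (comb_sqnorm M c)"
    using rkhs_norm_eqI[OF M] unfolding rkhs_def by auto
qed

section \<open>A membership criterion for the RKHS\<close>

text \<open>The energy of \<open>c\<close> is \<open>\<parallel>g - f\<parallel>\<^sup>2 - \<parallel>f\<parallel>\<^sup>2\<close> for the kernel combination \<open>g\<close> with
  coefficients \<open>c\<close>, but it is defined without knowing that \<open>f\<close> lies in the RKHS:
  its near-minimisers form an approximating sequence for \<open>f\<close>.\<close>

definition comb_energy :: "('a \<Rightarrow> 'a \<Rightarrow> real) \<Rightarrow> ('a \<Rightarrow> real) \<Rightarrow> ('a \<Rightarrow> real) \<Rightarrow> real" where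
  "comb_energy M f c = comb_sqnorm M c - 2 * (\<Sum>y\<in>{y. c y \<noteq> 0}. c y * f y)"

lemma comb_energy_eq:
  assumes "finite S" "{y. c y \<noteq> 0} \<subseteq> S"
  shows "comb_energy M f c = qform S M c - 2 * (\<Sum>y\<in>S. c y * f y)"
proof -
  have "(\<Sum>y\<in>{y. c y \<noteq> 0}. c y * f y) = (\<Sum>y\<in>S. c y * f y)"
    by (rule sum.mono_neutral_left) (use assms in auto)
  then show ?thesis unfolding comb_energy_def comb_sqnorm_eq_qform[OF assms] by simp
qed

lemma comb_energy_lower_bound:
  assumes M: "repr_kernel Z M" and c: "fin_comb Z c"
    and bound: "\<And>F a. finite F \<Longrightarrow> F \<subseteq> Z \<Longrightarrow> \<bar>\<Sum>x\<in>F. a x * f x\<bar> \<le> r * sqrt (qform F M a)"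
  shows "- r\<^sup>2 \<le> comb_energy M f c"
proof -
  define S where "S = {y. c y \<noteq> 0}"
  have S: "finite S" "S \<subseteq> Z" using fin_combD[OF c] by (auto simp: S_def)
  define s where "s = sqrt (qform S M c)"
  have "0 \<le> qform S M c" by (rule qform_nonneg[OF M S])
  then have "qform S M c = s\<^sup>2" by (simp add: s_def)
  moreover have "(\<Sum>y\<in>S. c y * f y) \<le> r * s" using bound[OF S, of c] by (simp add: s_def)
  ultimately have "- r\<^sup>2 + (s - r)\<^sup>2 \<le> qform S M c - 2 * (\<Sum>y\<in>S. c y * f y)"
    by (simp add: power2_diff mult.commute)
  moreover have "comb_energy M f c = qform S M c - 2 * (\<Sum>y\<in>S. c y * f y)"
    using comb_energy_eq[OF S(1)] by (simp add: S_def)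
  ultimately show ?thesis using zero_le_power2[of "s - r"] by linarith
qed

lemma comb_energy_parallelogram:
  assumes a: "fin_comb Z a" and b: "fin_comb Z b"
  shows "comb_sqnorm M (\<lambda>y. a y - b y)
    = 2 * comb_energy M f a + 2 * comb_energy M f b - 4 * comb_energy M f (\<lambda>y. (a y + b y) / 2)"
proof -
  define S where "S = {y. a y \<noteq> 0} \<union> {y. b y \<noteq> 0}"
  have S: "finite S" using fin_combD(1)[OF a] fin_combD(1)[OF b] by (simp add: S_def)
  have "(\<Sum>y\<in>S. (a y + b y) / 2 * f y) = ((\<Sum>y\<in>S. a y * f y) + (\<Sum>y\<in>S. b y * f y)) / 2"
    by (simp add: sum.distrib sum_divide_distrib[symmetric] algebra_simps)
  moreover have supp: "{y. a y - b y \<noteq> 0} \<subseteq> S" "{y. a y \<noteq> 0} \<subseteq> S" "{y. b y \<noteq> 0} \<subseteq> S"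
      "{y. (a y + b y) / 2 \<noteq> 0} \<subseteq> S"
    by (auto simp: S_def)
  ultimately show ?thesis
    unfolding comb_sqnorm_eq_qform[OF S supp(1)] comb_energy_eq[OF S supp(2)]
      comb_energy_eq[OF S supp(3)] comb_energy_eq[OF S supp(4)] qform_parallelogram[of S M a b]
    by simp
qed

lemma comb_energy_variation:
  assumes M: "repr_kernel Z M" and c: "fin_comb Z c" and x: "x \<in> Z"
  shows "comb_energy M f (\<lambda>y. c y + t * (if y = x then 1 else 0))
    = comb_energy M f c + 2 * t * (comb_eval M c x - f x) + t\<^sup>2 * M x x"
proof -
  define S where "S = insert x {y. c y \<noteq> 0}"
  have S: "finite S" "S \<subseteq> Z" "x \<in> S" "{y. c y \<noteq> 0} \<subseteq> S"
    using fin_combD[OF c] x by (auto simp: S_def)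
  have symS: "\<And>y z. y \<in> S \<Longrightarrow> z \<in> S \<Longrightarrow> M y z = M z y"
    using repr_kernel_sym[OF M] S(2) by blast
  have supp: "{y. c y + t * (if y = x then 1 else 0) \<noteq> 0} \<subseteq> S" by (auto simp: S_def)
  have "bform S M c (\<lambda>y. if y = x then 1 else 0) = comb_eval M c x"
    unfolding bform_delta_right[OF S(1,3)] comb_eval_eq_sum[OF S(1,4)]
    using symS S(3) by (auto intro!: sum.cong)
  moreover have "(\<Sum>y\<in>S. (c y + t * (if y = x then 1 else 0)) * f y) = (\<Sum>y\<in>S. c y * f y) + t * f x"
  proof -
    have "(\<Sum>y\<in>S. (c y + t * (if y = x then 1 else 0)) * f y)
        = (\<Sum>y\<in>S. c y * f y + (if y = x then t * f x else 0))"
      by (intro sum.cong refl) (auto simp: algebra_simps)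
    then show ?thesis using S(1,3) by (simp add: sum.distrib)
  qed
  moreover have "qform S M (\<lambda>y. c y + t * (if y = x then 1 else 0))
      = qform S M c + 2 * t * bform S M c (\<lambda>y. if y = x then 1 else 0) + t\<^sup>2 * M x x"
    using qform_add_scaled[OF symS, where a = c and t = t and b = "\<lambda>y. if y = x then 1 else 0"]
      qform_delta[OF S(1,3)] by simp
  ultimately show ?thesis
    unfolding comb_energy_eq[OF S(1) supp] comb_energy_eq[OF S(1,4)] by (simp add: algebra_simps)
qed

lemma comb_energy_near_min_pointwise:
  assumes M: "repr_kernel Z M" and min: "\<And>c'. fin_comb Z c' \<Longrightarrow> m \<le> comb_energy M f c'"
    and c: "fin_comb Z c" and near: "comb_energy M f c \<le> m + \<epsilon>" and x: "x \<in> Z"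
  shows "(comb_eval M c x - f x)\<^sup>2 \<le> \<epsilon> * M x x"
proof (rule quadratic_nonneg_discriminant)
  fix t
  have "fin_comb Z (\<lambda>y. c y + t * (if y = x then 1 else 0))"
    by (rule fin_combI[of "insert x {y. c y \<noteq> 0}"]) (use fin_combD[OF c] x in auto)
  from min[OF this] have "m \<le> comb_energy M f c + 2 * t * (comb_eval M c x - f x) + t\<^sup>2 * M x x"
    unfolding comb_energy_variation[OF M c x] .
  then show "0 \<le> \<epsilon> + 2 * t * (comb_eval M c x - f x) + t\<^sup>2 * M x x" using near by linarith
qed (rule repr_kernel_diag_nonneg[OF M x])

lemma comb_energy_near_min_close:
  assumes min: "\<And>c'. fin_comb Z c' \<Longrightarrow> m \<le> comb_energy M f c'"
    and a: "fin_comb Z a" and b: "fin_comb Z b"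
    and "comb_energy M f a \<le> m + \<epsilon>" "comb_energy M f b \<le> m + \<epsilon>'"
  shows "comb_sqnorm M (\<lambda>y. a y - b y) \<le> 2 * \<epsilon> + 2 * \<epsilon>'"
proof -
  have "fin_comb Z (\<lambda>y. (a y + b y) / 2)"
    by (rule fin_combI[of "{y. a y \<noteq> 0} \<union> {y. b y \<noteq> 0}"]) (use fin_combD[OF a] fin_combD[OF b] in auto)
  then have "m \<le> comb_energy M f (\<lambda>y. (a y + b y) / 2)" by (rule min)
  then show ?thesis using comb_energy_parallelogram[OF a b, of M f] assms(4,5) by linarith
qed

lemma LIMSEQ_of_sq_dist_le:
  fixes X :: "nat \<Rightarrow> real"
  assumes "\<And>n. (X n - L)\<^sup>2 \<le> C / real (Suc n)"
  shows "X \<longlonglongrightarrow> L"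
proof -
  have bound: "\<bar>X n - L\<bar> \<le> sqrt (C * inverse (real (Suc n)))" for n
    by (rule real_le_rsqrt) (use assms[of n] in \<open>simp add: divide_inverse\<close>)
  have "(\<lambda>n. sqrt (C * inverse (real (Suc n)))) \<longlonglongrightarrow> sqrt (C * 0)"
    by (intro tendsto_intros LIMSEQ_inverse_real_of_nat)
  then have lim0: "(\<lambda>n. sqrt (C * inverse (real (Suc n)))) \<longlonglongrightarrow> 0" by simp
  have "(\<lambda>n. X n - L) \<longlonglongrightarrow> 0"
    by (rule Lim_null_comparison[OF always_eventually lim0]) (use bound in simp)
  then show ?thesis by (rule LIM_zero_cancel)
qed

lemma comb_energy_minimizing_approx_seq:
  assumes M: "repr_kernel Z M" and min: "\<And>c. fin_comb Z c \<Longrightarrow> m \<le> comb_energy M f c"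
    and b: "\<And>n. fin_comb Z (b n)" "\<And>n. comb_energy M f (b n) \<le> m + 1 / real (Suc n)"
  shows "approx_seq M Z f b"
  unfolding approx_seq_def
proof (intro conjI allI impI ballI)
  show "fin_comb Z (b n)" for n by (rule b(1))
next
  fix e :: real assume "0 < e"
  then obtain N where N: "inverse (real (Suc N)) < e / 4"
    using reals_Archimedean[of "e / 4"] by auto
  have "comb_sqnorm M (\<lambda>y. b p y - b q y) < e" if "N \<le> p" "N \<le> q" for p q
  proof -
    have "1 / real (Suc p) \<le> inverse (real (Suc N))" "1 / real (Suc q) \<le> inverse (real (Suc N))"
      using that by (simp_all add: inverse_eq_divide frac_le)
    then show ?thesis
      using comb_energy_near_min_close[OF min b(1) b(1) b(2) b(2), of p q] N by linarith
  qed
  then show "\<exists>N. \<forall>p\<ge>N. \<forall>q\<ge>N. comb_sqnorm M (\<lambda>y. b p y - b q y) < e" by blast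
next
  fix x assume x: "x \<in> Z"
  show "(\<lambda>n. comb_eval M (b n) x) \<longlonglongrightarrow> f x"
  proof (rule LIMSEQ_of_sq_dist_le)
    show "(comb_eval M (b n) x - f x)\<^sup>2 \<le> M x x / real (Suc n)" for n
      using comb_energy_near_min_pointwise[OF M min b(1,2) x, of n] by simp
  qed
qed

lemma rkhs_memI:
  assumes M: "repr_kernel Z M" and "0 \<le> r"
    and bound: "\<And>F a. finite F \<Longrightarrow> F \<subseteq> Z \<Longrightarrow> \<bar>\<Sum>x\<in>F. a x * f x\<bar> \<le> r * sqrt (qform F M a)"
  shows "f \<in> rkhs M Z" "rkhs_norm M Z f \<le> r"
proof -
  let ?E = "comb_energy M f" and ?C = "{c. fin_comb Z c}"
  define m where "m = Inf (?E ` ?C)"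
  have zero: "(\<lambda>_. 0) \<in> ?C" by (simp add: fin_comb_def)
  have bdd: "bdd_below (?E ` ?C)"
    using comb_energy_lower_bound[OF M _ bound] by (intro bdd_belowI2) auto
  have min: "m \<le> ?E c" if "fin_comb Z c" for c
    unfolding m_def using bdd that by (auto intro: cInf_lower)
  have "\<exists>c\<in>?C. ?E c < m + 1 / real (Suc n)" for n
    using cInf_lessD[of "?E ` ?C" "m + 1 / real (Suc n)"] zero unfolding m_def by auto
  then obtain b where b: "\<And>n. fin_comb Z (b n)" "\<And>n. ?E (b n) \<le> m + 1 / real (Suc n)"
    by (metis (lifting) mem_Collect_eq less_imp_le)
  have "approx_seq M Z f b" by (rule comb_energy_minimizing_approx_seq[OF M min b])
  moreover obtain r' where "(\<lambda>n. sqrt (comb_sqnorm M (b n))) \<longlonglongrightarrow> r'"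
    using approx_seq_norm_convergent[OF M calculation] convergent_def by blast
  ultimately show "f \<in> rkhs M Z" "rkhs_norm M Z f \<le> r"
    using rkhs_norm_eqI[OF M] approx_seq_norm_limit_le[OF M _ _ \<open>0 \<le> r\<close> bound]
    unfolding rkhs_def by auto
qed

lemma le_sq_of_le_mult_sqrt:
  fixes q C s :: real
  assumes "0 \<le> q" "q \<le> C * sqrt q * s"
  shows "q \<le> C\<^sup>2 * s\<^sup>2"
proof (cases "q = 0")
  case False
  then have "0 < sqrt q" using assms(1) by simp
  have "sqrt q * sqrt q \<le> C * s * sqrt q" using assms by (simp add: mult_ac)
  from mult_right_le_imp_le[OF this \<open>0 < sqrt q\<close>] have "sqrt q \<le> C * s" .
  then have "(sqrt q)\<^sup>2 \<le> (C * s)\<^sup>2" using \<open>0 < sqrt q\<close> by (intro power_mono) auto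
  then show ?thesis using assms(1) by (simp add: power_mult_distrib)
qed simp

lemma kernel_le_of_rkhs_embedding:
  assumes K: "repr_kernel D K" and L: "repr_kernel D L" and sub: "rkhs L D \<subseteq> rkhs K D"
    and norm: "\<forall>f\<in>rkhs L D. rkhs_norm K D f \<le> C * rkhs_norm L D f"
  shows "kernel_le D L (\<lambda>x y. C\<^sup>2 * K x y)"
proof (rule kernel_leI[OF L repr_kernel_cmult[OF zero_le_power2 K]])
  fix F and a :: "'a \<Rightarrow> real" assume F: "finite F" "F \<subseteq> D"
  define a' where "a' x = (if x \<in> F then a x else 0)" for x
  have a': "fin_comb D a'" "{y. a' y \<noteq> 0} \<subseteq> F" by (auto intro: fin_combI[OF F] simp: a'_def)
  define g where "g = comb_eval L a'"
  define q where "q = qform F L a"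
  define s where "s = sqrt (qform F K a)"
  have "0 \<le> q" "0 \<le> s" using qform_nonneg[OF L F] qform_nonneg[OF K F] by (simp_all add: q_def s_def)
  have "qform F L a' = q" unfolding q_def by (rule qform_cong) (simp add: a'_def)
  then have g: "g \<in> rkhs L D" "rkhs_norm L D g = sqrt q"
    using rkhs_comb_eval[OF L a'(1)] comb_sqnorm_eq_qform[OF F(1) a'(2)] by (simp_all add: g_def)
  \<comment> \<open>The reproducing property: pairing \<open>a\<close> with \<open>g\<close> returns \<open>\<parallel>g\<parallel>\<^sup>2\<close>.\<close>
  have "q = (\<Sum>x\<in>F. a x * g x)"
    unfolding g_def sum_comb_eval_eq_bform[OF F(1) a'(2)] q_def qform_eq_bform bform_def
    by (intro sum.cong refl) (simp add: a'_def)
  also have "\<dots> \<le> rkhs_norm K D g * s"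
    using rkhs_functional_bound[OF K _ F, of g a] sub g(1) by (auto simp: s_def)
  also have "\<dots> \<le> C * sqrt q * s"
    using norm g \<open>0 \<le> s\<close> by (intro mult_right_mono) auto
  finally have "q \<le> C * sqrt q * s" .
  from le_sq_of_le_mult_sqrt[OF \<open>0 \<le> q\<close> this] have "q \<le> C\<^sup>2 * s\<^sup>2" .
  then show "qform F L a \<le> qform F (\<lambda>x y. C\<^sup>2 * K x y) a"
    using qform_nonneg[OF K F, of a] by (simp add: q_def s_def qform_kernel_cmult)
qed

lemma rkhs_restrict_norm_le:
  assumes L: "repr_kernel Z' L" and "Z \<subseteq> Z'" and le: "kernel_le Z L K" and f: "f \<in> rkhs L Z'"
  shows "f \<in> rkhs K Z" "rkhs_norm K Z f \<le> rkhs_norm L Z' f"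
proof -
  have K: "repr_kernel Z K" by (rule repr_kernel_kernel_le[OF repr_kernel_subset[OF L \<open>Z \<subseteq> Z'\<close>] le])
  have "\<bar>\<Sum>x\<in>F. a x * f x\<bar> \<le> rkhs_norm L Z' f * sqrt (qform F K a)" if "finite F" "F \<subseteq> Z" for F a
  proof -
    have "\<bar>\<Sum>x\<in>F. a x * f x\<bar> \<le> rkhs_norm L Z' f * sqrt (qform F L a)"
      using rkhs_functional_bound[OF L f] that \<open>Z \<subseteq> Z'\<close> by blast
    also have "\<dots> \<le> rkhs_norm L Z' f * sqrt (qform F K a)"
      using kernel_le_qform[OF le that] rkhs_norm_nonneg[OF L f] by (intro mult_left_mono) auto
    finally show ?thesis .
  qed
  then show "f \<in> rkhs K Z" "rkhs_norm K Z f \<le> rkhs_norm L Z' f"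
    using rkhs_memI[OF K rkhs_norm_nonneg[OF L f]] by auto
qed

section \<open>Moebius inversion and the weights \<open>T\<^sup>\<down>\<close>\<close>

lemma Delta_insert:
  assumes "finite v" "j \<notin> v" "j \<notin> u"
  shows "Delta (insert j v) g u = Delta v g u - Delta v g (insert j u)"
proof -
  have inj: "inj_on (insert j) (Pow v)" using assms(2) unfolding inj_on_def by (auto simp: insert_eq_iff)
  have disj: "Pow v \<inter> insert j ` Pow v = {}" using assms(2) by auto
  have "Delta (insert j v) g u
      = (\<Sum>w\<in>Pow v. (-1) ^ card w * g (u \<union> w)) + (\<Sum>w\<in>Pow v. (-1) ^ card (insert j w) * g (u \<union> insert j w))"
    unfolding Delta_def Pow_insert using assms(1) disj by (simp add: sum.union_disjoint sum.reindex[OF inj])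
  also have "(\<Sum>w\<in>Pow v. (-1) ^ card (insert j w) * g (u \<union> insert j w)) = - Delta v g (insert j u)"
    unfolding Delta_def sum_negf[symmetric]
  proof (rule sum.cong[OF refl])
    fix w assume "w \<in> Pow v"
    then have "finite w" "j \<notin> w" using assms(1,2) finite_subset by auto
    then show "(-1) ^ card (insert j w) * g (u \<union> insert j w) = - ((-1) ^ card w * g (insert j u \<union> w))"
      by simp
  qed
  finally show ?thesis unfolding Delta_def by simp
qed

lemma Delta_moebius:
  assumes "finite B" "B \<inter> v = {}"
  shows "(\<Sum>w\<in>Pow B. Delta (B - w) g (v \<union> w)) = g v"
  using assms
proof (induction B rule: finite_induct)
  case empty
  show ?case by (simp add: Delta_def)
next
  case (insert j B)
  have j: "j \<notin> v" "j \<notin> B" using insert by auto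
  have inj: "inj_on (insert j) (Pow B)" using j(2) unfolding inj_on_def by (auto simp: insert_eq_iff)
  have disj: "Pow B \<inter> insert j ` Pow B = {}" using j(2) by auto
  have "Delta (insert j B - w) g (v \<union> w) + Delta (insert j B - insert j w) g (v \<union> insert j w)
      = Delta (B - w) g (v \<union> w)" if "w \<in> Pow B" for w
  proof -
    have "insert j B - w = insert j (B - w)" "insert j B - insert j w = B - w"
        "v \<union> insert j w = insert j (v \<union> w)"
      using that j by auto
    moreover have "finite (B - w)" "j \<notin> B - w" "j \<notin> v \<union> w" using insert(1) that j by auto
    ultimately show ?thesis by (simp add: Delta_insert)
  qed
  then have step: "(\<Sum>w\<in>Pow B. Delta (insert j B - w) g (v \<union> w)
        + Delta (insert j B - insert j w) g (v \<union> insert j w))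
      = (\<Sum>w\<in>Pow B. Delta (B - w) g (v \<union> w))"
    by (intro sum.cong refl) auto
  have "(\<Sum>w\<in>Pow (insert j B). Delta (insert j B - w) g (v \<union> w))
      = (\<Sum>w\<in>Pow B. Delta (insert j B - w) g (v \<union> w))
        + (\<Sum>w\<in>Pow B. Delta (insert j B - insert j w) g (v \<union> insert j w))"
    unfolding Pow_insert using insert(1)
    by (simp only: sum.union_disjoint[OF _ _ disj] sum.reindex[OF inj] finite_Pow_iff finite_imageI o_def)
  also have "\<dots> = (\<Sum>w\<in>Pow B. Delta (B - w) g (v \<union> w))"
    unfolding step[symmetric] by (rule sum.distrib[symmetric])
  also have "\<dots> = g v" using insert by auto
  finally show ?case .
qed

lemma Delta_sum_le:
  assumes A: "finite A" "v \<subseteq> A" and U: "\<And>u. u \<in> U \<Longrightarrow> u \<subseteq> A"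
    and nonneg: "\<And>u. v \<subseteq> u \<Longrightarrow> u \<subseteq> A \<Longrightarrow> 0 \<le> Delta (A - u) g u"
  shows "(\<Sum>u\<in>{u\<in>U. v \<subseteq> u}. Delta (A - u) g u) \<le> g v"
proof -
  have inj: "inj_on (\<lambda>w. v \<union> w) (Pow (A - v))" unfolding inj_on_def by auto
  have sub: "{u\<in>U. v \<subseteq> u} \<subseteq> (\<lambda>w. v \<union> w) ` Pow (A - v)"
  proof
    fix u assume "u \<in> {u\<in>U. v \<subseteq> u}"
    then have "u = v \<union> (u - v)" "u - v \<in> Pow (A - v)" using U by auto
    then show "u \<in> (\<lambda>w. v \<union> w) ` Pow (A - v)" by blast
  qed
  have "(\<Sum>u\<in>{u\<in>U. v \<subseteq> u}. Delta (A - u) g u) \<le> (\<Sum>u\<in>(\<lambda>w. v \<union> w) ` Pow (A - v). Delta (A - u) g u)"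
  proof (rule sum_mono2[OF _ sub])
    show "finite ((\<lambda>w. v \<union> w) ` Pow (A - v))" using A(1) by simp
    show "0 \<le> Delta (A - u) g u" if "u \<in> (\<lambda>w. v \<union> w) ` Pow (A - v) - {u\<in>U. v \<subseteq> u}" for u
      using that A(2) by (intro nonneg) auto
  qed
  also have "\<dots> = (\<Sum>w\<in>Pow (A - v). Delta (A - (v \<union> w)) g (v \<union> w))"
    by (simp only: sum.reindex[OF inj] o_def)
  also have "\<dots> = (\<Sum>w\<in>Pow (A - v). Delta ((A - v) - w) g (v \<union> w))"
  proof -
    have "A - (v \<union> w) = (A - v) - w" for w by blast
    then show ?thesis by (simp only:)
  qed
  also have "\<dots> = g v" by (rule Delta_moebius) (use A in auto)
  finally show ?thesis .
qed

lemma Uset_iff: "u \<in> Uset d \<longleftrightarrow> finite u \<and> u \<subseteq> idx d"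
  unfolding Uset_def by simp

lemma Uset_finite: "u \<in> Uset d \<Longrightarrow> finite u"
  unfolding Uset_def by simp

lemma Mweights_Delta_union_le:
  assumes g: "Mweights d g" and u: "u \<in> Uset d"
    and w: "finite w" "v \<union> w \<in> Uset d" "u \<inter> (v \<union> w) = {}"
  shows "Delta (v \<union> w) g u \<le> Delta v g u"
  using w
proof (induction w rule: finite_induct)
  case empty
  show ?case by simp
next
  case (insert j w)
  have vw: "v \<union> w \<in> Uset d" using insert.prems(1) by (auto simp: Uset_iff)
  have IH: "Delta (v \<union> w) g u \<le> Delta v g u"
    using insert.IH vw insert.prems(2) by blast
  show ?case
  proof (cases "j \<in> v \<union> w")
    case True
    then show ?thesis using IH by (simp add: insert_absorb)
  next
    case False
    have "j \<notin> u" "j \<in> idx d" using insert.prems by (auto simp: Uset_iff)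
    then have "0 \<le> Delta (v \<union> w) g (insert j u)"
      using g vw u unfolding Mweights_def by (auto simp: Uset_iff)
    moreover have "Delta (v \<union> insert j w) g u = Delta (v \<union> w) g u - Delta (v \<union> w) g (insert j u)"
      using Delta_insert[of "v \<union> w" j u g] False \<open>j \<notin> u\<close> vw by (simp add: Uset_iff)
    ultimately show ?thesis using IH by linarith
  qed
qed

lemma Mweights_Delta_antimono:
  assumes "Mweights d g" "u \<in> Uset d" "v' \<in> Uset d" "v \<subseteq> v'" "u \<inter> v' = {}"
  shows "Delta v' g u \<le> Delta v g u"
proof -
  have "v' = v \<union> (v' - v)" using assms(4) by auto
  then show ?thesis
    using Mweights_Delta_union_le[OF assms(1,2), of "v' - v" v] assms(3,5) Uset_finite[OF assms(3)]
    by simp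
qed

lemma Tdown_scale: "Tdown d C g u = Tdown d 1 g u / C ^ (2 * card u)"
  by (cases d) (simp_all add: Tdown_def)

lemma Tdown_infinity_bounds:
  assumes g: "Mweights \<infinity> g" and u: "u \<in> Uset \<infinity>"
  shows "0 \<le> Tdown \<infinity> 1 g u" "Tdown \<infinity> 1 g u \<le> Delta ({1..s} - u) g u"
proof -
  define X where "X s = Delta ({1..s} - u) g u" for s
  have X_Uset: "{1..s} - u \<in> Uset \<infinity>" for s by (auto simp: Uset_iff idx_def)
  have X_nonneg: "0 \<le> X s" for s using g u X_Uset unfolding Mweights_def X_def by blast
  have "decseq X"
  proof (rule decseq_SucI)
    show "X (Suc s) \<le> X s" for s
      unfolding X_def by (rule Mweights_Delta_antimono[OF g u X_Uset]) auto
  qed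
  then obtain L where L: "X \<longlonglongrightarrow> L" "\<forall>s. L \<le> X s"
    using decseq_convergent[of X 0] X_nonneg by blast
  have "Tdown \<infinity> 1 g u = lim X" unfolding Tdown_def X_def by simp
  also have "\<dots> = L" by (rule limI[OF L(1)])
  finally have "Tdown \<infinity> 1 g u = L" .
  moreover have "0 \<le> L" using L(1) X_nonneg by (intro LIMSEQ_le_const) auto
  ultimately show "0 \<le> Tdown \<infinity> 1 g u" "Tdown \<infinity> 1 g u \<le> Delta ({1..s} - u) g u"
    using L(2) by (auto simp: X_def)
qed

lemma Tdown_one_bounds:
  assumes g: "Mweights d g" and A: "u \<subseteq> A" "A \<in> Uset d"
  shows "0 \<le> Tdown d 1 g u \<and> Tdown d 1 g u \<le> Delta (A - u) g u"
proof -
  have u: "u \<in> Uset d" using A finite_subset by (auto simp: Uset_iff)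
  have le_A: "Delta v g u \<le> Delta (A - u) g u" if "A - u \<subseteq> v" "v \<in> Uset d" "u \<inter> v = {}" for v
    by (rule Mweights_Delta_antimono[OF g u that(2,1,3)])
  show ?thesis
  proof (cases d)
    case (enat n)
    have "idx d = {1..n}" by (auto simp: idx_def enat)
    then have T: "Tdown d 1 g u = Delta (idx d - u) g u" by (simp add: Tdown_def enat)
    have "idx d - u \<in> Uset d" by (simp add: Uset_iff \<open>idx d = {1..n}\<close>)
    then have "0 \<le> Delta (idx d - u) g u" using g u unfolding Mweights_def by blast
    moreover have "Delta (idx d - u) g u \<le> Delta (A - u) g u"
      using A by (intro le_A \<open>idx d - u \<in> Uset d\<close>) (auto simp: Uset_iff)
    ultimately show ?thesis unfolding T by simp
  next
    case infinity
    define s where "s = Max (insert 0 A)"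
    have "A \<subseteq> {1..s}" using A(2) by (auto simp: Uset_iff idx_def infinity s_def)
    then have "Delta ({1..s} - u) g u \<le> Delta (A - u) g u"
      by (intro le_A) (auto simp: Uset_iff idx_def infinity)
    then show ?thesis
      using Tdown_infinity_bounds(1)[of g u] Tdown_infinity_bounds(2)[of g u s] g u
      unfolding infinity by auto
  qed
qed

lemma Tdown_nonneg:
  assumes "Mweights d g" "u \<in> Uset d"
  shows "0 \<le> Tdown d C g u"
proof -
  have "0 \<le> Tdown d 1 g u" using Tdown_one_bounds[OF assms(1) order_refl assms(2)] by blast
  moreover have "0 \<le> C ^ (2 * card u)" unfolding power_mult by simp
  ultimately show ?thesis unfolding Tdown_scale[of d C] by (rule divide_nonneg_nonneg)
qed

lemma Tdown_mult_scale_le: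
  assumes g: "Mweights d g" and u: "u \<in> Uset d"
  shows "Tdown d C g u * C ^ (2 * card u) \<le> Tdown d 1 g u"
proof (cases "C ^ (2 * card u) = 0")
  case True
  show ?thesis unfolding True using Tdown_one_bounds[OF g order_refl u] by simp
next
  case False
  then show ?thesis by (simp add: Tdown_scale[of d C])
qed

lemma Tdown_sum_le:
  assumes g: "Mweights d g" and U: "finite U" "U \<subseteq> Uset d" and v: "v \<in> Uset d"
  shows "(\<Sum>u\<in>{u\<in>U. v \<subseteq> u}. Tdown d 1 g u) \<le> g v"
proof -
  define A where "A = \<Union>U \<union> v"
  have "finite u \<and> u \<subseteq> idx d" if "u \<in> U" for u using U(2) that Uset_iff by blast
  then have "finite (\<Union>U)" "\<Union>U \<subseteq> idx d" using U(1) by auto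
  then have A: "A \<in> Uset d" using v by (auto simp: A_def Uset_iff)
  have "(\<Sum>u\<in>{u\<in>U. v \<subseteq> u}. Tdown d 1 g u) \<le> (\<Sum>u\<in>{u\<in>U. v \<subseteq> u}. Delta (A - u) g u)"
    using Tdown_one_bounds[OF g _ A] by (intro sum_mono) (auto simp: A_def)
  also have "\<dots> \<le> g v"
  proof (rule Delta_sum_le)
    show "0 \<le> Delta (A - u) g u" if "u \<subseteq> A" for u
    proof -
      have "A - u \<in> Uset d" "u \<in> Uset d" using A that finite_subset by (auto simp: Uset_iff)
      then show ?thesis using g unfolding Mweights_def by blast
    qed
  qed (use A in \<open>auto simp: A_def Uset_iff\<close>)
  finally show ?thesis .
qed

lemma Union_Pow_Uset:
  assumes U: "finite U" "U \<subseteq> Uset d"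
  shows "finite (\<Union>(Pow ` U))" "\<Union>(Pow ` U) \<subseteq> Uset d"
proof -
  have Ufin: "finite u" "u \<subseteq> idx d" if "u \<in> U" for u using U(2) that Uset_iff by blast+
  then show "finite (\<Union>(Pow ` U))" using U(1) by simp
  show "\<Union>(Pow ` U) \<subseteq> Uset d"
  proof
    fix v assume "v \<in> \<Union>(Pow ` U)"
    then obtain u where "u \<in> U" "v \<subseteq> u" by auto
    then show "v \<in> Uset d" using Ufin[of u] finite_subset by (auto simp: Uset_iff)
  qed
qed

lemma Tdown_weighted_sum_le:
  assumes g: "Mweights d g" and U: "finite U" "U \<subseteq> Uset d"
    and q: "\<And>v. v \<in> Uset d \<Longrightarrow> 0 \<le> q v"
    and p: "\<And>u. u \<in> U \<Longrightarrow> p u \<le> C ^ (2 * card u) * (\<Sum>v\<in>Pow u. q v)"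
  shows "(\<Sum>u\<in>U. Tdown d C g u * p u) \<le> (\<Sum>v\<in>\<Union>(Pow ` U). g v * q v)"
proof -
  define V where "V = \<Union>(Pow ` U)"
  have V: "finite V" "V \<subseteq> Uset d" unfolding V_def by (rule Union_Pow_Uset[OF U])+
  have "(\<Sum>u\<in>U. Tdown d C g u * p u) \<le> (\<Sum>u\<in>U. Tdown d 1 g u * (\<Sum>v\<in>Pow u. q v))"
  proof (rule sum_mono)
    fix u assume u: "u \<in> U"
    then have uU: "u \<in> Uset d" using U(2) by blast
    have "0 \<le> (\<Sum>v\<in>Pow u. q v)"
      using uU by (intro sum_nonneg q) (auto simp: Uset_iff intro: finite_subset)
    have "Tdown d C g u * p u \<le> Tdown d C g u * (C ^ (2 * card u) * (\<Sum>v\<in>Pow u. q v))"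
      by (rule mult_left_mono[OF p[OF u] Tdown_nonneg[OF g uU]])
    also have "\<dots> = Tdown d C g u * C ^ (2 * card u) * (\<Sum>v\<in>Pow u. q v)"
      by (simp only: mult.assoc)
    also have "\<dots> \<le> Tdown d 1 g u * (\<Sum>v\<in>Pow u. q v)"
      by (rule mult_right_mono[OF Tdown_mult_scale_le[OF g uU]]) fact
    finally show "Tdown d C g u * p u \<le> Tdown d 1 g u * (\<Sum>v\<in>Pow u. q v)" .
  qed
  also have "\<dots> = (\<Sum>u\<in>U. \<Sum>v\<in>{v\<in>V. v \<subseteq> u}. Tdown d 1 g u * q v)"
    by (intro sum.cong refl) (auto simp: V_def sum_distrib_left intro!: sum.cong)
  also have "\<dots> = (\<Sum>v\<in>V. (\<Sum>u\<in>{u\<in>U. v \<subseteq> u}. Tdown d 1 g u) * q v)"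
    by (simp add: sum.swap_restrict[OF U(1) V(1)] sum_distrib_right)
  also have "\<dots> \<le> (\<Sum>v\<in>V. g v * q v)"
  proof (rule sum_mono)
    fix v assume "v \<in> V"
    then have v: "v \<in> Uset d" using V(2) by blast
    show "(\<Sum>u\<in>{u\<in>U. v \<subseteq> u}. Tdown d 1 g u) * q v \<le> g v * q v"
      by (rule mult_right_mono[OF Tdown_sum_le[OF g U v] q[OF v]])
  qed
  finally show ?thesis by (simp add: V_def)
qed

section \<open>Weighted product kernels\<close>

lemma PiE_Uset_coord: "x \<in> PiE (idx d) (\<lambda>_. D) \<Longrightarrow> u \<in> Uset d \<Longrightarrow> j \<in> u \<Longrightarrow> x j \<in> D"
  unfolding Uset_def by (auto simp: PiE_iff)

lemma Zset_coord: "x \<in> Zset d D \<eta> m \<Longrightarrow> u \<in> Uset d \<Longrightarrow> j \<in> u \<Longrightarrow> x j \<in> D"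
  unfolding Zset_def using PiE_Uset_coord by blast

lemma repr_kernel_prodk:
  assumes m: "repr_kernel D m" and u: "finite u" and Z: "\<And>x j. x \<in> Z \<Longrightarrow> j \<in> u \<Longrightarrow> x j \<in> D"
  shows "repr_kernel Z (prodk m u)"
proof -
  have "repr_kernel Z (\<lambda>x y. \<Prod>j\<in>u. m (x j) (y j))"
    using Z by (intro repr_kernel_prod u repr_kernel_comp[OF m]) auto
  then show ?thesis by (simp add: prodk_def[abs_def])
qed

lemma kernel_le_prodk:
  assumes l: "repr_kernel D l" and le: "kernel_le D l (\<lambda>s t. C\<^sup>2 * (1 + k s t))"
    and u: "finite u" and Z: "\<And>x j. x \<in> Z \<Longrightarrow> j \<in> u \<Longrightarrow> x j \<in> D"
  shows "kernel_le Z (prodk l u) (\<lambda>x y. C ^ (2 * card u) * (\<Sum>v\<in>Pow u. prodk k v x y))"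
proof -
  have "kernel_le Z (\<lambda>x y. \<Prod>j\<in>u. l (x j) (y j)) (\<lambda>x y. \<Prod>j\<in>u. C\<^sup>2 * (1 + k (x j) (y j)))"
  proof (rule kernel_le_prod[OF u])
    fix j assume "j \<in> u"
    then have "(\<lambda>x. x j) ` Z \<subseteq> D" using Z by auto
    then show "repr_kernel Z (\<lambda>x y. l (x j) (y j))"
      and "kernel_le Z (\<lambda>x y. l (x j) (y j)) (\<lambda>x y. C\<^sup>2 * (1 + k (x j) (y j)))"
      using repr_kernel_comp[OF l] repr_kernel_comp[OF le[unfolded kernel_le_def]]
      unfolding kernel_le_def by auto
  qed
  moreover have "(\<Prod>j\<in>u. C\<^sup>2 * (1 + k (x j) (y j))) = C ^ (2 * card u) * (\<Sum>v\<in>Pow u. prodk k v x y)"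
    for x y
  proof -
    have "(\<Prod>j\<in>u. C\<^sup>2 * (1 + k (x j) (y j))) = (C\<^sup>2) ^ card u * (\<Prod>j\<in>u. k (x j) (y j) + 1)"
      by (simp add: prod.distrib add.commute)
    also have "(\<Prod>j\<in>u. k (x j) (y j) + 1) = (\<Sum>v\<in>Pow u. prodk k v x y)"
      by (simp add: prod_add[OF u] prodk_def)
    finally show ?thesis by (simp add: power_mult)
  qed
  ultimately show ?thesis by (simp add: prodk_def[abs_def])
qed

lemma Zset_summable:
  assumes m: "repr_kernel D m" and \<eta>: "weights d \<eta>" and x: "x \<in> Zset d D \<eta> m" and y: "y \<in> Zset d D \<eta> m"
  shows "(\<lambda>u. \<eta> u * prodk m u x y) summable_on Uset d"
proof -
  define h where "h u = 1 / 2 * (\<eta> u * prodk m u x x + \<eta> u * prodk m u y y)" for u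
  have "h summable_on Uset d"
    using x y unfolding h_def Zset_def by (intro summable_on_cmult_right summable_on_add) auto
  moreover have "norm (\<eta> u * prodk m u x y) \<le> h u" if u: "u \<in> Uset d" for u
  proof -
    have "repr_kernel {x, y} (prodk m u)"
      using Zset_coord x y u by (intro repr_kernel_prodk[OF m Uset_finite[OF u]]) auto
    from repr_kernel_abs_le[OF this] have "\<bar>prodk m u x y\<bar> \<le> (prodk m u x x + prodk m u y y) / 2"
      by simp
    moreover have "0 \<le> \<eta> u" using \<eta> u unfolding weights_def by blast
    ultimately have "\<eta> u * \<bar>prodk m u x y\<bar> \<le> \<eta> u * ((prodk m u x x + prodk m u y y) / 2)"
      by (rule mult_left_mono)
    then show ?thesis using \<open>0 \<le> \<eta> u\<close> by (simp add: h_def abs_mult algebra_simps)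
  qed
  ultimately have "(\<lambda>u. norm (\<eta> u * prodk m u x y)) summable_on Uset d"
    by (rule summable_on_comparison_test) auto
  then show ?thesis using summable_on_iff_abs_summable_on_real by blast
qed

lemma has_sum_sum:
  fixes f :: "'i \<Rightarrow> 'u \<Rightarrow> 'b::topological_comm_monoid_add"
  assumes "finite I" "\<And>i. i \<in> I \<Longrightarrow> (f i has_sum s i) A"
  shows "((\<lambda>u. \<Sum>i\<in>I. f i u) has_sum (\<Sum>i\<in>I. s i)) A"
  using assms
proof (induction I rule: finite_induct)
  case empty
  show ?case by simp
next
  case (insert i I)
  have "((\<lambda>u. f i u + (\<Sum>i\<in>I. f i u)) has_sum (s i + (\<Sum>i\<in>I. s i))) A"
    by (rule has_sum_add) (use insert in auto)
  then show ?case using insert(1,2) by simp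
qed

lemma has_sum_qform:
  assumes "finite F" "\<And>x y. x \<in> F \<Longrightarrow> y \<in> F \<Longrightarrow> ((\<lambda>u. K u x y) has_sum M x y) U"
  shows "((\<lambda>u. qform F (K u) a) has_sum qform F M a) U"
  unfolding qform_def using assms by (intro has_sum_sum has_sum_cmult_right) auto

lemma qform_Mker_has_sum:
  assumes m: "repr_kernel D m" and \<eta>: "weights d \<eta>" and F: "finite F" "F \<subseteq> Zset d D \<eta> m"
  shows "((\<lambda>u. \<eta> u * qform F (prodk m u) a) has_sum qform F (Mker d \<eta> m) a) (Uset d)"
proof -
  have "((\<lambda>u. \<eta> u * prodk m u x y) has_sum Mker d \<eta> m x y) (Uset d)" if "x \<in> F" "y \<in> F" for x y
    unfolding Mker_def using Zset_summable[OF m \<eta>] F(2) that by (intro has_sum_infsum) auto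
  from has_sum_qform[OF F(1) this] show ?thesis by (simp add: qform_kernel_cmult)
qed

lemma repr_kernel_Mker:
  assumes m: "repr_kernel D m" and \<eta>: "weights d \<eta>"
  shows "repr_kernel (Zset d D \<eta> m) (Mker d \<eta> m)"
proof (rule repr_kernelI)
  fix x y assume x: "x \<in> Zset d D \<eta> m" and y: "y \<in> Zset d D \<eta> m"
  have "prodk m u x y = prodk m u y x" if "u \<in> Uset d" for u
    unfolding prodk_def using repr_kernel_sym[OF m] Zset_coord[OF x that] Zset_coord[OF y that]
    by (intro prod.cong) auto
  then show "Mker d \<eta> m x y = Mker d \<eta> m y x" unfolding Mker_def by (intro infsum_cong) simp
next
  fix F a assume F: "finite F" "F \<subseteq> Zset d D \<eta> m"
  show "0 \<le> qform F (Mker d \<eta> m) a"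
  proof (rule has_sum_nonneg[OF qform_Mker_has_sum[OF m \<eta> F]])
    fix u assume u: "u \<in> Uset d"
    have "repr_kernel F (prodk m u)"
      using Zset_coord F(2) u by (intro repr_kernel_prodk[OF m Uset_finite[OF u]]) blast
    then show "0 \<le> \<eta> u * qform F (prodk m u) a"
      using \<eta> u F(1) unfolding weights_def by (simp add: qform_nonneg)
  qed
qed

lemma Tdown_Mker_partial_sum_le:
  assumes k: "repr_kernel D k" and l: "repr_kernel D l"
    and le: "kernel_le D l (\<lambda>s t. C\<^sup>2 * (1 + k s t))"
    and \<gamma>s: "Mweights d \<gamma>s" "weight_le d \<gamma>s \<gamma>" and \<gamma>: "weights d \<gamma>"
    and F: "finite F" "F \<subseteq> Zset d D \<gamma> k" and U: "finite U" "U \<subseteq> Uset d"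
  shows "(\<Sum>u\<in>U. Tdown d C \<gamma>s u * qform F (prodk l u) a) \<le> qform F (Mker d \<gamma> k) a"
proof -
  define q where "q v = qform F (prodk k v) a" for v
  have coord: "x j \<in> D" if "x \<in> F" "u \<in> Uset d" "j \<in> u" for x u j
    using Zset_coord F(2) that by blast
  have q: "0 \<le> q v" if "v \<in> Uset d" for v
  proof -
    have "repr_kernel F (prodk k v)"
      using coord that by (intro repr_kernel_prodk[OF k Uset_finite[OF that]]) blast
    then show ?thesis unfolding q_def using qform_nonneg F(1) by blast
  qed
  have p: "qform F (prodk l u) a \<le> C ^ (2 * card u) * (\<Sum>v\<in>Pow u. q v)" if "u \<in> U" for u
  proof -
    have u: "u \<in> Uset d" using U(2) that by blast
    have "kernel_le F (prodk l u) (\<lambda>x y. C ^ (2 * card u) * (\<Sum>v\<in>Pow u. prodk k v x y))"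
      using coord u by (intro kernel_le_prodk[OF l le Uset_finite[OF u]]) auto
    from kernel_le_qform[OF this F(1) order_refl] show ?thesis
      by (simp add: q_def qform_kernel_cmult qform_kernel_sum)
  qed
  define V where "V = \<Union>(Pow ` U)"
  have V: "finite V" "V \<subseteq> Uset d" unfolding V_def by (rule Union_Pow_Uset[OF U])+
  have "(\<Sum>u\<in>U. Tdown d C \<gamma>s u * qform F (prodk l u) a) \<le> (\<Sum>v\<in>V. \<gamma>s v * q v)"
    unfolding V_def by (rule Tdown_weighted_sum_le[OF \<gamma>s(1) U q p])
  also have "\<dots> \<le> (\<Sum>v\<in>V. \<gamma> v * q v)"
    using \<gamma>s(2) q V(2) unfolding weight_le_def by (intro sum_mono mult_right_mono) auto
  also have "\<dots> \<le> (\<Sum>\<^sub>\<infinity>v\<in>Uset d. \<gamma> v * q v)"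
  proof (rule finite_sum_le_infsum[OF _ V])
    show "(\<lambda>v. \<gamma> v * q v) summable_on Uset d"
      using qform_Mker_has_sum[OF k \<gamma> F] unfolding q_def by (rule has_sum_imp_summable)
    show "0 \<le> \<gamma> v * q v" if "v \<in> Uset d - V" for v
      using \<gamma> q that unfolding weights_def by simp
  qed
  also have "\<dots> = qform F (Mker d \<gamma> k) a"
    using qform_Mker_has_sum[OF k \<gamma> F] unfolding q_def by (simp add: has_sum_iff)
  finally show ?thesis .
qed

lemma Zset_subsetI:
  assumes m: "repr_kernel D m" and \<eta>: "weights d \<eta>" and Z: "Z \<subseteq> PiE (idx d) (\<lambda>_. D)"
    and bound: "\<And>x U. x \<in> Z \<Longrightarrow> finite U \<Longrightarrow> U \<subseteq> Uset d \<Longrightarrow> (\<Sum>u\<in>U. \<eta> u * prodk m u x x) \<le> B x"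
  shows "Z \<subseteq> Zset d D \<eta> m"
proof
  fix x assume x: "x \<in> Z"
  have nonneg: "0 \<le> \<eta> u * prodk m u x x" if u: "u \<in> Uset d" for u
  proof -
    have "repr_kernel {x} (prodk m u)"
    proof (rule repr_kernel_prodk[OF m Uset_finite[OF u]])
      show "y j \<in> D" if "y \<in> {x}" "j \<in> u" for y j
        using PiE_Uset_coord[of x d D u j] x Z u that by auto
    qed
    then have "0 \<le> prodk m u x x" by (rule repr_kernel_diag_nonneg) simp
    then show ?thesis using \<eta> u unfolding weights_def by simp
  qed
  have "(\<lambda>u. \<eta> u * prodk m u x x) summable_on Uset d"
  proof (rule nonneg_bdd_above_summable_on)
    show "bdd_above (sum (\<lambda>u. \<eta> u * prodk m u x x) ` {U. U \<subseteq> Uset d \<and> finite U})"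
      using bound[OF x] by (intro bdd_aboveI[where M = "B x"]) auto
  qed (rule nonneg)
  then show "x \<in> Zset d D \<eta> m" using Z x unfolding Zset_def by blast
qed

lemma kernel_le_Mker_of_partial_sums:
  assumes l: "repr_kernel D l" and T: "weights d T" and Z: "Z \<subseteq> Zset d D T l" and K: "repr_kernel Z K"
    and partial: "\<And>F U a. finite F \<Longrightarrow> F \<subseteq> Z \<Longrightarrow> finite U \<Longrightarrow> U \<subseteq> Uset d \<Longrightarrow>
      (\<Sum>u\<in>U. T u * qform F (prodk l u) a) \<le> qform F K a"
  shows "kernel_le Z (Mker d T l) K"
proof (rule kernel_leI[OF repr_kernel_subset[OF repr_kernel_Mker[OF l T] Z] K])
  fix F a assume F: "finite F" "F \<subseteq> Z"
  then have sum: "((\<lambda>u. T u * qform F (prodk l u) a) has_sum qform F (Mker d T l) a) (Uset d)"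
    using Z by (intro qform_Mker_has_sum[OF l T]) auto
  have "qform F (Mker d T l) a = (\<Sum>\<^sub>\<infinity>u\<in>Uset d. T u * qform F (prodk l u) a)"
    using sum by (simp add: has_sum_iff)
  also have "\<dots> \<le> qform F K a"
    using has_sum_imp_summable[OF sum] partial[OF F] by (rule infsum_le_finite_sums)
  finally show "qform F (Mker d T l) a \<le> qform F K a" .
qed

theorem mainTheorem16:
  fixes d :: enat and D :: "'a set" and k l :: "'a \<Rightarrow> 'a \<Rightarrow> real"
    and \<gamma> \<gamma>s :: "nat set \<Rightarrow> real" and Cd :: real
  assumes "D \<noteq> {}"
    and "repr_kernel D k" and "\<exists>x\<in>D. \<exists>y\<in>D. k x y \<noteq> 0"
    and "weights d \<gamma>" and "Zset d D \<gamma> k \<noteq> {}"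
    and "repr_kernel D l" and "\<exists>x\<in>D. \<exists>y\<in>D. l x y \<noteq> 0"
    and "rkhs l D \<subseteq> rkhs (\<lambda>x y. 1 + k x y) D"
    and "Cd > 0"
    and "\<forall>f\<in>rkhs l D. rkhs_norm (\<lambda>x y. 1 + k x y) D f \<le> Cd * rkhs_norm l D f"
    and "Mweights d \<gamma>s" and "weight_le d \<gamma>s \<gamma>"
  shows "Zset d D \<gamma> k \<subseteq> Zset d D (Tdown d Cd \<gamma>s) l \<and>
    (\<forall>f\<in>rkhs (Mker d (Tdown d Cd \<gamma>s) l) (Zset d D (Tdown d Cd \<gamma>s) l).
       f \<in> rkhs (Mker d \<gamma> k) (Zset d D \<gamma> k) \<and>
       rkhs_norm (Mker d \<gamma> k) (Zset d D \<gamma> k) f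
         \<le> rkhs_norm (Mker d (Tdown d Cd \<gamma>s) l) (Zset d D (Tdown d Cd \<gamma>s) l) f)"
proof -
  note k = assms(2) and \<gamma> = assms(4) and l = assms(6) and \<gamma>s = assms(11,12)
  let ?T = "Tdown d Cd \<gamma>s" and ?ZK = "Zset d D \<gamma> k" and ?ZL = "Zset d D (Tdown d Cd \<gamma>s) l"
  have le: "kernel_le D l (\<lambda>s t. Cd\<^sup>2 * (1 + k s t))"
    using kernel_le_of_rkhs_embedding[OF repr_kernel_add[OF repr_kernel_one k] l assms(8,10)] by simp
  have T: "weights d ?T" using Tdown_nonneg[OF \<gamma>s(1)] unfolding weights_def by blast
  note partial = Tdown_Mker_partial_sum_le[OF k l le \<gamma>s \<gamma>]
  have incl: "?ZK \<subseteq> ?ZL"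
  proof (rule Zset_subsetI[OF l T])
    show "(\<Sum>u\<in>U. ?T u * prodk l u x x) \<le> qform {x} (Mker d \<gamma> k) (\<lambda>_. 1)"
      if "x \<in> ?ZK" "finite U" "U \<subseteq> Uset d" for x U
      using partial[of "{x}" U "\<lambda>_. 1"] that by (simp add: qform_singleton_one)
  qed (auto simp: Zset_def)
  have "kernel_le ?ZK (Mker d ?T l) (Mker d \<gamma> k)"
    by (rule kernel_le_Mker_of_partial_sums[OF l T incl repr_kernel_Mker[OF k \<gamma>] partial])
  then show ?thesis using incl rkhs_restrict_norm_le[OF repr_kernel_Mker[OF l T] incl] by blast
qed

end
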